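(* Let $A$ be a unital C$^*$-algebra and let $\gamma,\varepsilon>0$. (1) For every $f\in C([0,1])$ there exists $\delta>0$ such that for all positive contractions $a,b\in A$ and all $\tau\in T(A)$ with $\|a-b\|_{2,\tau}<\delta$ we have $\|f(a)-f(b)\|_{2,\tau}<\gamma$. (2) There is $\delta>0$ such that for all positive contractions $a,b\in A$ and all $\tau\in T(A)$ with $\|a-b\|_{2,\tau}<\delta$ we have $d_\tau((a-\varepsilon)_+)<d_\tau(b)+\gamma$.
   Context: $T(A)$ is the set of tracial states of $A$; $\|x\|_{2,\tau}=\tau(x^*x)^{1/2}$. For $a\ge0$, $(a-\varepsilon)_+=f_\varepsilon(a)$ with $f_\varepsilon(t)=\max\{0,t-\varepsilon\}$, and $d_\tau(a)=\lim_{n\to\infty}\tau(a^{1/n})$. *)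

theory Defs
  imports "HOL-Analysis.Analysis" "HOL-Computational_Algebra.Polynomial"
begin

text \<open>A unital C*-algebra: a unital Banach algebra (real structure from the type class)
  together with a compatible complex scalar multiplication and an involution
  satisfying the C*-identity.\<close>

locale unital_cstar_algebra =
  fixes star :: "'a::{real_normed_algebra_1,banach} \<Rightarrow> 'a"
    and scC :: "complex \<Rightarrow> 'a \<Rightarrow> 'a"
  assumes scC_add_left: "scC (c + d) x = scC c x + scC d x"
    and scC_add_right: "scC c (x + y) = scC c x + scC c y"
    and scC_assoc: "scC c (scC d x) = scC (c * d) x"
    and scC_one: "scC 1 x = x"
    and scC_of_real: "scC (complex_of_real r) x = scaleR r x"
    and scC_mult_left: "scC c x * y = scC c (x * y)"
    and scC_mult_right: "x * scC c y = scC c (x * y)"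
    and norm_scC: "norm (scC c x) = cmod c * norm x"
    and star_add: "star (x + y) = star x + star y"
    and star_mult: "star (x * y) = star y * star x"
    and star_star: "star (star x) = x"
    and star_scC: "star (scC c x) = scC (cnj c) (star x)"
    and cstar_identity: "norm (star x * x) = (norm x)\<^sup>2"

definition positive_contraction :: "('a::real_normed_algebra_1 \<Rightarrow> 'a) \<Rightarrow> 'a \<Rightarrow> bool" where
  "positive_contraction star a \<longleftrightarrow> (\<exists>b. a = star b * b) \<and> norm a \<le> 1"

definition tracial_state ::
  "('a::real_normed_algebra_1 \<Rightarrow> 'a) \<Rightarrow> (complex \<Rightarrow> 'a \<Rightarrow> 'a) \<Rightarrow> ('a \<Rightarrow> complex) \<Rightarrow> bool" where
  "tracial_state star scC \<tau> \<longleftrightarrow>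
     (\<forall>x y. \<tau> (x + y) = \<tau> x + \<tau> y) \<and>
     (\<forall>c x. \<tau> (scC c x) = c * \<tau> x) \<and>
     (\<forall>x. Im (\<tau> (star x * x)) = 0 \<and> Re (\<tau> (star x * x)) \<ge> 0) \<and>
     \<tau> 1 = 1 \<and>
     (\<forall>x y. \<tau> (x * y) = \<tau> (y * x))"

definition norm2 :: "('a::real_normed_algebra_1 \<Rightarrow> 'a) \<Rightarrow> ('a \<Rightarrow> complex) \<Rightarrow> 'a \<Rightarrow> real" where
  "norm2 star \<tau> x = sqrt (Re (\<tau> (star x * x)))"

definition peval :: "(complex \<Rightarrow> 'a \<Rightarrow> 'a) \<Rightarrow> complex poly \<Rightarrow> 'a::real_normed_algebra_1 \<Rightarrow> 'a" where
  "peval scC p a = (\<Sum>i\<le>degree p. scC (coeff p i) (a ^ i))"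

definition cfc :: "(complex \<Rightarrow> 'a \<Rightarrow> 'a) \<Rightarrow> (real \<Rightarrow> complex) \<Rightarrow> 'a::real_normed_algebra_1 \<Rightarrow> 'a" where
  "cfc scC f a = (THE y. \<forall>P :: nat \<Rightarrow> complex poly.
      uniform_limit {0..1} (\<lambda>n t. poly (P n) (complex_of_real t)) f sequentially \<longrightarrow>
      (\<lambda>n. peval scC (P n) a) \<longlonglongrightarrow> y)"

definition cut_down :: "(complex \<Rightarrow> 'a \<Rightarrow> 'a) \<Rightarrow> real \<Rightarrow> 'a::real_normed_algebra_1 \<Rightarrow> 'a" where
  "cut_down scC \<epsilon> a = cfc scC (\<lambda>t. complex_of_real (max 0 (t - \<epsilon>))) a"

definition dim_fun :: "(complex \<Rightarrow> 'a \<Rightarrow> 'a) \<Rightarrow> ('a \<Rightarrow> complex) \<Rightarrow> 'a::real_normed_algebra_1 \<Rightarrow> real" where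
  "dim_fun scC \<tau> a = lim (\<lambda>n. Re (\<tau> (cfc scC (\<lambda>t. complex_of_real (root n t)) a)))"

end

theory Submission
  imports Defs "HOL-Complex_Analysis.Cauchy_Integral_Formula"
begin

text \<open>
  The C*-axioms alone yield enough functional calculus. A Hermitian contraction \<open>h\<close> is the real
  part of the unitary \<open>u = h + i sqrt (1 - h\<^sup>2)\<close> (square root by the binomial series); Cauchy's
  estimates on the unit circle and the C*-identity applied to \<open>h ^ 2^k\<close> then give
  \<open>\<parallel>p(h)\<parallel> \<le> sup\<^bsub>|t| \<le> \<parallel>h\<parallel>\<^esub> |p(t)|\<close> for every polynomial \<open>p\<close>. Kaplansky's argument shows that \<open>b\<^sup>* b\<close>
  is positive, so for a positive contraction \<open>a\<close> the map \<open>p \<mapsto> p(a)\<close> is bounded by the sup norm on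
  \<open>[0, 1]\<close> and extends to continuous \<open>f\<close> by uniform approximation.

  For (1), approximate \<open>f\<close> uniformly by a polynomial \<open>p\<close>; since \<open>\<parallel>x y\<parallel>\<^sub>2\<^sub>,\<^sub>\<tau> \<le> \<parallel>x\<parallel> \<parallel>y\<parallel>\<^sub>2\<^sub>,\<^sub>\<tau>\<close>
  and \<open>a\<^sup>i - b\<^sup>i\<close> telescopes, \<open>p\<close> is Lipschitz for \<open>\<parallel>\<cdot>\<parallel>\<^sub>2\<^sub>,\<^sub>\<tau>\<close> on contractions, uniformly in \<open>\<tau>\<close>.
  For (2), squeeze a continuous ramp \<open>g\<close> between all \<open>(t - \<epsilon>)\<^sub>+\<^sup>1\<^sup>/\<^sup>m\<close> and \<open>t\<^sup>1\<^sup>/\<^sup>n + \<gamma>/3\<close>,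
  and apply (1) to \<open>g\<close>.
\<close>

lemma Suc_mult_power_mult_one_minus_le:
  fixes s :: real
  assumes "0 \<le> s" "s \<le> 1"
  shows "real (Suc N) * s ^ N * (1 - s) \<le> 1"
proof -
  have "(\<Sum>i<Suc N. s ^ N) \<le> (\<Sum>i<Suc N. s ^ i)"
    by (rule sum_mono) (use assms in \<open>auto intro: power_decreasing\<close>)
  then have "real (Suc N) * s ^ N \<le> (\<Sum>i<Suc N. s ^ i)" by simp
  then have "real (Suc N) * s ^ N * (1 - s) \<le> (\<Sum>i<Suc N. s ^ i) * (1 - s)"
    by (rule mult_right_mono) (use assms in auto)
  also have "\<dots> = (1 - s) * (\<Sum>i<Suc N. s ^ i)" by (simp add: mult.commute)
  also have "\<dots> = 1 - s ^ Suc N" by (rule one_diff_power_eq[symmetric])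
  also have "\<dots> \<le> 1" using assms by simp
  finally show ?thesis .
qed

lemma power2_le_of_abs_le:
  fixes t r :: real
  shows "\<bar>t\<bar> \<le> r \<Longrightarrow> t^2 \<le> r^2"
  by (metis abs_ge_zero power2_abs power_mono)

lemma abs_power_mult_sq_diff_le:
  fixes t \<rho> :: real
  assumes "\<bar>t\<bar> \<le> \<rho>"
  shows "\<bar>t ^ N * (\<rho>^2 - t^2)\<bar> \<le> 2 * \<rho> ^ (N + 2) / real (Suc N)"
proof (cases "\<rho> = 0")
  case True
  then have "t = 0" using assms by simp
  then show ?thesis using True by simp
next
  case False
  then have \<rho>: "\<rho> > 0" using assms by simp
  define s where "s = \<bar>t\<bar> / \<rho>"
  have s0: "0 \<le> s" and s1: "s \<le> 1" using assms \<rho> by (auto simp: s_def)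
  have ts: "\<bar>t\<bar> = \<rho> * s" using \<rho> by (simp add: s_def)
  have t2: "t^2 = \<rho>^2 * s^2" by (metis power2_abs power_mult_distrib ts)
  have "t^2 \<le> \<rho>^2" using assms by (rule power2_le_of_abs_le)
  then have "\<bar>t ^ N * (\<rho>^2 - t^2)\<bar> = \<bar>t\<bar> ^ N * (\<rho>^2 - t^2)"
    by (simp add: abs_mult power_abs)
  also have "\<dots> = \<rho> ^ (N + 2) * (s ^ N * (1 - s) * (1 + s))"
  proof -
    have e1: "\<bar>t\<bar> ^ N = \<rho> ^ N * s ^ N" by (simp add: ts power_mult_distrib)
    have "(1 - s) * (1 + s) = 1 - s^2" by (simp add: power2_eq_square algebra_simps)
    then have e2: "\<rho>^2 - t^2 = \<rho>^2 * ((1 - s) * (1 + s))" by (simp add: t2 right_diff_distrib)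
    show ?thesis unfolding e1 e2 by (simp add: power_add power2_eq_square mult_ac)
  qed
  also have "\<dots> \<le> \<rho> ^ (N + 2) * (s ^ N * (1 - s) * 2)"
    using s0 s1 \<rho> by (intro mult_left_mono) (auto intro!: mult_left_mono)
  also have "\<dots> \<le> \<rho> ^ (N + 2) * (2 / real (Suc N))"
  proof (intro mult_left_mono)
    have "s ^ N * (1 - s) \<le> 1 / real (Suc N)"
      using Suc_mult_power_mult_one_minus_le[OF s0 s1, of N] by (simp add: field_simps mult.assoc)
    then show "s ^ N * (1 - s) * 2 \<le> 2 / real (Suc N)" by simp
  qed (use \<rho> in simp)
  finally show ?thesis by (simp add: mult_ac)
qed

lemma Cauchy_Schwarz_of_quadratic_nonneg:
  fixes A B C :: real
  assumes q: "\<And>l. 0 \<le> A - 2 * l * B + l^2 * C" and A: "A \<ge> 0" and C: "C \<ge> 0"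
  shows "B \<le> sqrt A * sqrt C"
proof (cases "C = 0")
  case True
  show ?thesis
  proof (rule ccontr)
    assume "\<not> ?thesis"
    then have B: "B > 0" using True by simp
    have "0 \<le> A - 2 * ((A + 1) / (2 * B)) * B" using q[of "(A + 1) / (2 * B)"] True by simp
    also have "\<dots> = -1" using B by (simp add: field_simps)
    finally show False by simp
  qed
next
  case False
  then have C': "C > 0" using C by simp
  have "0 \<le> A - 2 * (B / C) * B + (B / C)^2 * C" by (rule q)
  also have "\<dots> = A - B^2 / C" using C' by (simp add: field_simps power2_eq_square)
  finally have "B^2 \<le> A * C" using C' by (simp add: field_simps)
  then have "sqrt (B^2) \<le> sqrt (A * C)" by (rule real_sqrt_le_mono)
  then show ?thesis by (simp add: real_sqrt_mult)
qed

lemma root_le_root_Suc: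
  assumes "0 \<le> t" and "t \<le> 1"
  shows "root n t \<le> root (Suc n) t"
  using assms by (cases "n = 0") (auto intro: real_root_increasing simp: real_root_ge_zero)

lemma root_le_one:
  assumes "t \<le> 1"
  shows "root n t \<le> 1"
  using assms by (cases "n = 0") auto

lemma root_gt_one_minus:
  assumes "x > 0" and "\<eta> > 0"
  obtains n where "n > 0" and "1 - \<eta> < root n x"
proof -
  have "(\<lambda>n. root n x) \<longlonglongrightarrow> 1"
    using assms(1) by (rule LIMSEQ_root_const)
  then have "\<forall>\<^sub>F n in sequentially. 1 - \<eta> < root n x"
    using assms(2) by (intro order_tendstoD) auto
  then obtain n0 where "\<And>n. n \<ge> n0 \<Longrightarrow> 1 - \<eta> < root n x"
    unfolding eventually_sequentially by blast
  then show ?thesis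
    using that[of "Suc n0"] by simp
qed

lemma root_cut_down_le_ramp:
  assumes "\<epsilon> > 0" and "t \<le> 1"
  shows "root m (max 0 (t - \<epsilon>)) \<le> min 1 (max 0 (2 * t / \<epsilon> - 1))"
proof (cases "t \<le> \<epsilon>")
  case False
  then have "2 * t / \<epsilon> - 1 > 1"
    using assms by (simp add: field_simps)
  then show ?thesis
    using assms by (simp add: root_le_one)
qed simp

lemma ramp_le_root_plus:
  assumes "\<epsilon> > 0" and "n > 0" and "0 \<le> t" and "\<eta> \<ge> 0" and "1 - \<eta> < root n (\<epsilon>/2)"
  shows "min 1 (max 0 (2 * t / \<epsilon> - 1)) \<le> root n t + \<eta>"
proof (cases "t \<le> \<epsilon>/2")
  case True
  then have "2 * t / \<epsilon> - 1 \<le> 0"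
    using assms by (simp add: field_simps)
  then show ?thesis
    using assms real_root_ge_zero[of t n] by simp
next
  case False
  then have "root n (\<epsilon>/2) \<le> root n t"
    using assms by (intro real_root_le_mono) auto
  then have "1 \<le> root n t + \<eta>"
    using assms(5) by linarith
  then show ?thesis
    by (simp add: min_le_iff_disj)
qed

lemma pow2_power_gt_linear:
  fixes q C :: real
  assumes "q > 1"
  obtains k where "C * 2^k + 1 < q ^ (2^k)"
proof -
  define d where "d = q - 1"
  have d: "d > 0" using assms by (simp add: d_def)
  obtain k where k: "(2 * \<bar>C\<bar> + 1) / d^2 < (2::real) ^ k"
    using real_arch_pow[of 2 "(2 * \<bar>C\<bar> + 1) / d^2"] by auto
  define M where "M = (2::real) ^ k"
  have M1: "M \<ge> 1" by (simp add: M_def)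
  have "2 * \<bar>C\<bar> + 1 < M * d^2"
    using k d by (simp add: M_def field_simps)
  then have "M * (2 * \<bar>C\<bar> + 1) < M * (M * d^2)"
    using M1 by simp
  moreover have "M * (2 * \<bar>C\<bar> + 1) = \<bar>C\<bar> * (2 * M) + M"
    by (simp add: algebra_simps)
  moreover have "C * (2 * M) \<le> \<bar>C\<bar> * (2 * M)"
    using M1 by (intro mult_right_mono) auto
  ultimately have "C * (2 * M) + 1 < M * (M * d^2)"
    using M1 by linarith
  also have "\<dots> = (M * d)^2"
    by (simp add: power2_eq_square)
  also have "\<dots> \<le> (q ^ (2^k))^2"
    using Bernoulli_inequality[of d "2^k"] d M1 by (intro power_mono) (auto simp: d_def M_def)
  also have "\<dots> = q ^ (2 ^ Suc k)"
    by (simp add: power_mult[symmetric] mult.commute)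
  finally show ?thesis
    using that[of "Suc k"] by (simp add: M_def)
qed

text \<open>Combined with the C*-identity \<open>\<parallel>h ^ 2^k\<parallel> = \<parallel>h\<parallel> ^ 2^k\<close> for Hermitian \<open>h\<close>, this removes a
  polynomially growing constant from a norm estimate.\<close>

lemma le_of_pow2_bound:
  fixes a b C :: real
  assumes b: "0 \<le> b" and h: "\<And>k. a ^ (2^k) \<le> (C * 2^k + 1) * b ^ (2^k)"
  shows "a \<le> b"
proof (rule ccontr)
  assume "\<not> a \<le> b"
  moreover have b_pos: "b > 0"
    using h[of 0] b \<open>\<not> a \<le> b\<close> by (cases "b = 0") auto
  ultimately have "a / b > 1"
    by (simp add: field_simps)
  then obtain k where "C * 2^k + 1 < (a / b) ^ (2^k)"
    using pow2_power_gt_linear by blast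
  then have "(C * 2^k + 1) * b ^ (2^k) < a ^ (2^k)"
    using b_pos by (simp add: power_divide field_simps)
  then show False using h[of k] by simp
qed

lemma higher_deriv_poly: "(deriv ^^ k) (poly p) = poly ((pderiv ^^ k) p)"
proof (induction k)
  case (Suc k)
  show ?case
    by (simp add: Suc) (rule ext, rule DERIV_imp_deriv, simp)
qed simp

lemma norm_coeff_le_of_circle_bound:
  fixes Q :: "complex poly"
  assumes "\<And>z. cmod z = 1 \<Longrightarrow> cmod (poly Q z) \<le> B"
  shows "cmod (coeff Q k) \<le> B"
proof -
  have "norm ((deriv ^^ k) (poly Q) 0) \<le> fact k * B / 1 ^ k"
    by (rule Cauchy_inequality) (auto intro: holomorphic_intros continuous_intros assms simp: poly_holomorphic_on)
  moreover have "(deriv ^^ k) (poly Q) 0 = fact k * coeff Q k"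
    by (simp add: higher_deriv_poly poly_0_coeff_0 coeff_higher_pderiv pochhammer_fact)
  ultimately have "fact k * cmod (coeff Q k) \<le> fact k * B"
    by (simp add: norm_mult)
  then show ?thesis by simp
qed

lemma power_mult_distrib_commuting:
  fixes a b :: "'a::monoid_mult"
  assumes "a * b = b * a"
  shows "(a * b) ^ n = a ^ n * b ^ n"
proof (induction n)
  case (Suc n)
  have "(a * b) ^ Suc n = a * (b * a ^ n) * b ^ n"
    using Suc by (simp add: mult.assoc)
  also have "b * a ^ n = a ^ n * b"
    using power_commuting_commutes[of a b n] assms by simp
  also have "a * (a ^ n * b) * b ^ n = a ^ Suc n * b ^ Suc n"
    by (simp only: mult.assoc power_Suc)
  finally show ?case .
qed simp

lemma real_poly_uniform_approx:
  fixes g :: "real \<Rightarrow> real"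
  assumes g: "continuous_on {0..1} g" and e: "e > 0"
  shows "\<exists>p. \<forall>t\<in>{0..1}. cmod (complex_of_real (g t) - poly p (of_real t)) < e"
proof -
  obtain h where h: "real_polynomial_function h" and he: "\<And>x. x \<in> {0..1} \<Longrightarrow> \<bar>g x - h x\<bar> < e"
    using Stone_Weierstrass_real_polynomial_function[OF compact_Icc g e] by blast
  obtain a n where hs: "h = (\<lambda>x. \<Sum>i\<le>n. a i * x ^ i)"
    using real_polynomial_function_imp_sum[OF h] by blast
  define p where "p = (\<Sum>i\<le>n. monom (complex_of_real (a i)) i)"
  have "poly p (of_real t) = of_real (h t)" for t
    by (simp add: p_def hs poly_sum poly_monom)
  then show ?thesis
    using he by (intro exI[of _ p]) (simp flip: of_real_diff)
qed

lemma complex_poly_uniform_approx: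
  fixes f :: "real \<Rightarrow> complex"
  assumes f: "continuous_on {0..1} f" and e: "e > 0"
  shows "\<exists>p. \<forall>t\<in>{0..1}. cmod (f t - poly p (of_real t)) < e"
proof -
  have "continuous_on {0..1} (\<lambda>t. Re (f t))" "continuous_on {0..1} (\<lambda>t. Im (f t))"
    using f by (auto intro: continuous_intros)
  then obtain p1 p2 where
    p1: "\<forall>t\<in>{0..1}. cmod (complex_of_real (Re (f t)) - poly p1 (of_real t)) < e/2" and
    p2: "\<forall>t\<in>{0..1}. cmod (complex_of_real (Im (f t)) - poly p2 (of_real t)) < e/2"
    using real_poly_uniform_approx[of "\<lambda>t. Re (f t)" "e/2"] real_poly_uniform_approx[of "\<lambda>t. Im (f t)" "e/2"] e
    by (meson half_gt_zero)
  define p where "p = p1 + smult \<i> p2"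
  show ?thesis
  proof (intro exI ballI)
    fix t :: real assume t: "t \<in> {0..1}"
    have "f t - poly p (of_real t) = (complex_of_real (Re (f t)) - poly p1 (of_real t))
        + \<i> * (complex_of_real (Im (f t)) - poly p2 (of_real t))"
      by (simp add: p_def algebra_simps complex_eq)
    also have "cmod \<dots> \<le> cmod (complex_of_real (Re (f t)) - poly p1 (of_real t))
        + cmod (complex_of_real (Im (f t)) - poly p2 (of_real t))"
      by (rule order.trans[OF norm_triangle_ineq]) (simp add: norm_mult)
    also have "\<dots> < e/2 + e/2" using p1 p2 t by (intro add_strict_mono) auto
    finally show "cmod (f t - poly p (of_real t)) < e" by simp
  qed
qed

lemma uniform_limit_poly_exists:
  fixes f :: "real \<Rightarrow> complex"
  assumes "continuous_on {0..1} f"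
  shows "\<exists>P. uniform_limit {0..1::real} (\<lambda>n t. poly (P n) (of_real t)) f sequentially"
proof -
  have "\<forall>n. \<exists>p. \<forall>t\<in>{0..1}. cmod (f t - poly p (of_real t)) < 1 / real (Suc n)"
    using complex_poly_uniform_approx[OF assms] by simp
  then obtain P where P: "\<And>n t. t \<in> {0..1} \<Longrightarrow> cmod (f t - poly (P n) (of_real t)) < 1 / real (Suc n)"
    by metis
  have "uniform_limit {0..1} (\<lambda>n t. poly (P n) (of_real t)) f sequentially"
  proof (rule uniform_limitI)
    fix e :: real assume e: "e > 0"
    obtain N where N: "1 / real (Suc N) < e" using nat_approx_posE[OF e] by blast
    show "\<forall>\<^sub>F n in sequentially. \<forall>t\<in>{0..1}. dist (poly (P n) (of_real t)) (f t) < e"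
      unfolding eventually_sequentially
    proof (intro exI allI impI ballI)
      fix n t assume n: "N \<le> n" and t: "t \<in> {0..1::real}"
      have "1 / real (Suc n) \<le> 1 / real (Suc N)" using n by (simp add: frac_le)
      then show "dist (poly (P n) (of_real t)) (f t) < e"
        using P[OF t, of n] N by (simp add: dist_norm norm_minus_commute)
    qed
  qed
  then show ?thesis by blast
qed

text \<open>\<open>cayley_poly p\<close> is \<open>z \<mapsto> (2 z)\<^sup>d p ((z + z\<^sup>-\<^sup>1) / 2)\<close> for \<open>d = degree p\<close>; on the unit circle
  it is \<open>(2 z)\<^sup>d p (Re z)\<close>.\<close>

definition cayley_poly :: "complex poly \<Rightarrow> complex poly" where
  "cayley_poly p = (\<Sum>n\<le>degree p. smult (coeff p n) ([:0, 2:] ^ (degree p - n) * [:1, 0, 1:] ^ n))"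

lemma degree_cayley_poly: "degree (cayley_poly p) \<le> 2 * degree p"
  unfolding cayley_poly_def
proof (rule degree_sum_le)
  fix n assume n: "n \<in> {..degree p}"
  have "degree (smult (coeff p n) ([:0, 2::complex:] ^ (degree p - n) * [:1, 0, 1:] ^ n))
      \<le> degree ([:0, 2::complex:] ^ (degree p - n)) + degree ([:1, 0, 1::complex:] ^ n)"
    using degree_mult_le degree_smult_le order.trans by blast
  also have "\<dots> \<le> 1 * (degree p - n) + 2 * n"
    by (intro add_mono order.trans[OF degree_power_le]) auto
  also have "\<dots> \<le> 2 * degree p"
    using n by auto
  finally show "degree (smult (coeff p n) ([:0, 2::complex:] ^ (degree p - n) * [:1, 0, 1:] ^ n))
      \<le> 2 * degree p" .
qed simp

lemma poly_cayley_poly_circle: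
  assumes "cmod z = 1"
  shows "poly (cayley_poly p) z = (2 * z) ^ degree p * poly p (of_real (Re z))"
proof -
  define d where "d = degree p"
  have "z * cnj z = 1"
    using assms complex_norm_square[of z] by simp
  moreover have "2 * z * of_real (Re z) = z * (z + cnj z)"
    by (simp add: complex_add_cnj)
  ultimately have z: "1 + z * z = 2 * z * of_real (Re z)"
    by (simp add: distrib_left)
  have "(2 * z) ^ (d - n) * (1 + z * z) ^ n = (2 * z) ^ d * of_real (Re z) ^ n" if "n \<le> d" for n
  proof -
    have "(2 * z) ^ (d - n) * (1 + z * z) ^ n = ((2 * z) ^ (d - n) * (2 * z) ^ n) * of_real (Re z) ^ n"
      by (simp only: z power_mult_distrib mult.assoc)
    also have "(2 * z) ^ (d - n) * (2 * z) ^ n = (2 * z) ^ d"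
      using that by (simp only: power_add[symmetric] le_add_diff_inverse2)
    finally show ?thesis .
  qed
  then have "poly (cayley_poly p) z = (\<Sum>n\<le>d. (2 * z) ^ d * (coeff p n * of_real (Re z) ^ n))"
    by (simp add: cayley_poly_def poly_sum d_def mult.commute mult.left_commute)
  also have "\<dots> = (2 * z) ^ d * poly p (of_real (Re z))"
    by (simp add: poly_altdef d_def sum_distrib_left)
  finally show ?thesis by (simp add: d_def)
qed

section \<open>The binomial series of \<open>sqrt (1 - z)\<close>\<close>

text \<open>All coefficients but the
  first are \<open>\<le> 0\<close> and their partial sums telescope, so the series converges absolutely on the
  closed unit ball of any Banach algebra.\<close>

definition sqrt_coeff :: "nat \<Rightarrow> real" where
  "sqrt_coeff n = ((1/2) gchoose n) * (-1) ^ n"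

lemma sqrt_coeff_0 [simp]: "sqrt_coeff 0 = 1"
  by (simp add: sqrt_coeff_def)

lemma sqrt_coeff_Suc: "sqrt_coeff (Suc k) = sqrt_coeff k * (real k - 1/2) / real (Suc k)"
proof -
  have gchoose_Suc: "(1/2) gchoose Suc k = ((1/2) gchoose k) * (1/2 - real k) / real (Suc k)"
    using gbinomial_mult_1[of "1/2::real" k] by (simp add: field_simps del: of_nat_Suc)
  show ?thesis
    unfolding sqrt_coeff_def power_Suc gchoose_Suc by (simp add: field_simps)
qed

lemma sqrt_coeff_1 [simp]: "sqrt_coeff (Suc 0) = - 1/2"
  by (simp add: sqrt_coeff_def)

lemma sqrt_coeff_nonpos: "n \<ge> 1 \<Longrightarrow> sqrt_coeff n \<le> 0"
proof (induction n rule: dec_induct)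
  case base then show ?case by (simp add: sqrt_coeff_1)
next
  case (step n)
  have "real n - 1/2 \<ge> 0" using step.hyps by simp
  then have "sqrt_coeff n * (real n - 1/2) \<le> 0" using step.IH by (simp add: mult_nonpos_nonneg)
  then show ?case by (simp add: sqrt_coeff_Suc divide_nonpos_pos)
qed

lemma sum_sqrt_coeff: "(\<Sum>k\<le>n. sqrt_coeff k) = - 2 * real (Suc n) * sqrt_coeff (Suc n)"
proof (induction n)
  case 0 then show ?case by (simp add: sqrt_coeff_1)
next
  case (Suc n)
  have "(\<Sum>k\<le>Suc n. sqrt_coeff k) = - 2 * real (Suc n) * sqrt_coeff (Suc n) + sqrt_coeff (Suc n)" using Suc by simp
  also have "\<dots> = - 2 * real (Suc (Suc n)) * sqrt_coeff (Suc (Suc n))"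
    by (simp add: sqrt_coeff_Suc[of "Suc n"] field_simps)
  finally show ?case .
qed

lemma sum_sqrt_coeff_nonneg: "(\<Sum>k\<le>n. sqrt_coeff k) \<ge> 0"
  using sqrt_coeff_nonpos[of "Suc n"] by (simp add: sum_sqrt_coeff mult_nonpos_nonpos)

lemma sum_abs_sqrt_coeff: "(\<Sum>k\<le>n. \<bar>sqrt_coeff k\<bar>) = 2 - (\<Sum>k\<le>n. sqrt_coeff k)"
proof (induction n)
  case (Suc n)
  then show ?case using sqrt_coeff_nonpos[of "Suc n"] by simp
qed simp

lemma sum_abs_sqrt_coeff_le: "(\<Sum>k\<le>n. \<bar>sqrt_coeff k\<bar>) \<le> 2"
  using sum_abs_sqrt_coeff sum_sqrt_coeff_nonneg by simp

lemma summable_abs_sqrt_coeff: "summable (\<lambda>n. \<bar>sqrt_coeff n\<bar>)"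
  by (rule bounded_imp_summable[of _ 2]) (auto intro: sum_abs_sqrt_coeff_le)

lemma suminf_abs_sqrt_coeff_le: "(\<Sum>n. \<bar>sqrt_coeff n\<bar>) \<le> 2"
proof (rule suminf_le_const[OF summable_abs_sqrt_coeff])
  fix n
  show "sum (\<lambda>n. \<bar>sqrt_coeff n\<bar>) {..<n} \<le> 2"
  proof (cases n)
    case (Suc m)
    then have "{..<n} = {..m}" by auto
    then show ?thesis using sum_abs_sqrt_coeff_le by simp
  qed simp
qed

lemma suminf_abs_sqrt_coeff_Suc_le: "(\<Sum>n. \<bar>sqrt_coeff (Suc n)\<bar>) \<le> 1"
  using suminf_split_head[OF summable_abs_sqrt_coeff] suminf_abs_sqrt_coeff_le by simp

lemma sqrt_coeff_Cauchy_product: "(\<Sum>i\<le>k. sqrt_coeff i * sqrt_coeff (k - i)) = (if k = 0 then 1 else if k = 1 then -1 else 0)"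
proof -
  have "(\<Sum>i\<le>k. sqrt_coeff i * sqrt_coeff (k - i)) = (\<Sum>i=0..k. ((1/2::real) gchoose i) * ((1/2) gchoose (k - i))) * (-1)^k"
    unfolding sqrt_coeff_def sum_distrib_right atMost_atLeast0
  proof (rule sum.cong)
    fix i assume "i \<in> {0..k}"
    then have "(-1::real)^i * (-1)^(k-i) = (-1)^k" by (simp add: power_add[symmetric])
    then show "(1 / (2::real) gchoose i) * (- 1) ^ i * ((1 / 2 gchoose (k - i)) * (- 1) ^ (k - i)) =
       (1 / 2 gchoose i) * (1 / 2 gchoose (k - i)) * (- 1) ^ k"
      by (metis (no_types, lifting) mult.assoc mult.left_commute)
  qed simp
  also have "\<dots> = ((1::real) gchoose k) * (-1)^k"
    using gbinomial_Vandermonde[of "1/2::real" "1/2" k] by simp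
  also have "\<dots> = (if k = 0 then 1 else if k = 1 then -1 else 0)"
  proof -
    have "((1::real) gchoose k) = of_nat (1 choose k)"
      using binomial_gbinomial[of 1 k, where 'a=real] by simp
    then show ?thesis by (cases k) (auto simp: binomial_eq_0)
  qed
  finally show ?thesis .
qed

definition sqrt_one_minus :: "'a::{real_normed_algebra_1,banach} \<Rightarrow> 'a" where
  "sqrt_one_minus z = (\<Sum>n. sqrt_coeff n *\<^sub>R z ^ n)"

lemma summable_norm_sqrt_one_minus:
  fixes z :: "'a::{real_normed_algebra_1,banach}"
  assumes "norm z \<le> 1"
  shows "summable (\<lambda>n. norm (sqrt_coeff n *\<^sub>R z ^ n))"
proof (rule summable_norm_comparison_test)
  show "\<exists>N. \<forall>n\<ge>N. norm (sqrt_coeff n *\<^sub>R z ^ n) \<le> \<bar>sqrt_coeff n\<bar>"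
  proof (intro exI allI impI)
    fix n
    have "norm (z ^ n) \<le> 1"
      by (rule order.trans[OF norm_power_ineq]) (use assms in \<open>simp add: power_le_one\<close>)
    then show "norm (sqrt_coeff n *\<^sub>R z ^ n) \<le> \<bar>sqrt_coeff n\<bar>"
      by (simp add: mult_left_le)
  qed
qed (rule summable_abs_sqrt_coeff)

lemma summable_sqrt_one_minus:
  fixes z :: "'a::{real_normed_algebra_1,banach}"
  assumes "norm z \<le> 1"
  shows "summable (\<lambda>n. sqrt_coeff n *\<^sub>R z ^ n)"
  by (rule summable_norm_cancel[OF summable_norm_sqrt_one_minus[OF assms]])

lemma sqrt_one_minus_square:
  fixes z :: "'a::{real_normed_algebra_1,banach}"
  assumes "norm z \<le> 1"
  shows "sqrt_one_minus z * sqrt_one_minus z = 1 - z"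
proof -
  have "sqrt_one_minus z * sqrt_one_minus z
      = (\<Sum>k. \<Sum>i\<le>k. (sqrt_coeff i *\<^sub>R z ^ i) * (sqrt_coeff (k - i) *\<^sub>R z ^ (k - i)))"
    unfolding sqrt_one_minus_def
    by (rule Cauchy_product[OF summable_norm_sqrt_one_minus[OF assms] summable_norm_sqrt_one_minus[OF assms]])
  also have "\<dots> = (\<Sum>k. (\<Sum>i\<le>k. sqrt_coeff i * sqrt_coeff (k - i)) *\<^sub>R z ^ k)"
  proof -
    have "(\<Sum>i\<le>k. (sqrt_coeff i *\<^sub>R z ^ i) * (sqrt_coeff (k - i) *\<^sub>R z ^ (k - i)))
        = (\<Sum>i\<le>k. sqrt_coeff i * sqrt_coeff (k - i)) *\<^sub>R z ^ k" for k
      unfolding scaleR_sum_left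
      by (rule sum.cong) (auto simp: power_add[symmetric])
    then show ?thesis by simp
  qed
  also have "\<dots> = (\<Sum>k. (if k = 0 then 1 else if k = 1 then -1 else 0) *\<^sub>R z ^ k)"
    by (simp add: sqrt_coeff_Cauchy_product)
  also have "\<dots> = (\<Sum>k\<in>{0,1}. (if k = 0 then 1 else if k = 1 then -1 else 0) *\<^sub>R z ^ k)"
    by (rule suminf_finite) auto
  also have "\<dots> = 1 - z" by simp
  finally show ?thesis .
qed

lemma sqrt_one_minus_commute:
  fixes z :: "'a::{real_normed_algebra_1,banach}"
  assumes "norm z \<le> 1" "y * z = z * y"
  shows "y * sqrt_one_minus z = sqrt_one_minus z * y"
proof -
  have "y * z ^ n = z ^ n * y" for n
    using power_commuting_commutes[of z y n] assms(2) by simp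
  then show ?thesis unfolding sqrt_one_minus_def
    using suminf_mult[OF summable_sqrt_one_minus[OF assms(1)], of y]
      suminf_mult2[OF summable_sqrt_one_minus[OF assms(1)], of y]
    by simp
qed

lemma norm_sqrt_one_minus_minus_partial:
  fixes z :: "'a::{real_normed_algebra_1,banach}"
  assumes "norm z \<le> 1"
  shows "norm (sqrt_one_minus z - (\<Sum>k<n. sqrt_coeff k *\<^sub>R z ^ k))
    \<le> (\<Sum>k. \<bar>sqrt_coeff (k + n)\<bar>)"
proof -
  have sn: "summable (\<lambda>k. norm (sqrt_coeff (k + n) *\<^sub>R z ^ (k + n)))"
    using summable_norm_sqrt_one_minus[OF assms]
      summable_iff_shift[where f="\<lambda>m. norm (sqrt_coeff m *\<^sub>R z ^ m)" and k=n]
    by simp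
  have "sqrt_one_minus z - (\<Sum>k<n. sqrt_coeff k *\<^sub>R z ^ k) = (\<Sum>k. sqrt_coeff (k + n) *\<^sub>R z ^ (k + n))"
    unfolding sqrt_one_minus_def
    using suminf_split_initial_segment[OF summable_sqrt_one_minus[OF assms], of n] by simp
  also have "norm \<dots> \<le> (\<Sum>k. norm (sqrt_coeff (k + n) *\<^sub>R z ^ (k + n)))"
    by (rule summable_norm[OF sn])
  also have "\<dots> \<le> (\<Sum>k. \<bar>sqrt_coeff (k + n)\<bar>)"
  proof (rule suminf_le[OF _ sn])
    show "summable (\<lambda>k. \<bar>sqrt_coeff (k + n)\<bar>)"
      using summable_abs_sqrt_coeff summable_iff_shift[where f="\<lambda>m. \<bar>sqrt_coeff m\<bar>" and k=n] by simp
    fix k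
    have "norm (z ^ (k+n)) \<le> 1"
      by (rule order.trans[OF norm_power_ineq]) (use assms in \<open>simp add: power_le_one\<close>)
    then show "norm (sqrt_coeff (k + n) *\<^sub>R z ^ (k + n)) \<le> \<bar>sqrt_coeff (k + n)\<bar>"
      by (simp add: mult_left_le)
  qed
  finally show ?thesis .
qed

lemma sqrt_coeff_tail_tendsto_0: "(\<lambda>n. \<Sum>k. \<bar>sqrt_coeff (k + n)\<bar>) \<longlonglongrightarrow> 0"
  by (rule suminf_exist_split2[OF summable_abs_sqrt_coeff])

lemma norm_one_minus_sqrt_one_minus:
  fixes z :: "'a::{real_normed_algebra_1,banach}"
  assumes "norm z \<le> 1"
  shows "norm (1 - sqrt_one_minus z) \<le> 1"
  using norm_sqrt_one_minus_minus_partial[OF assms, of 1] suminf_abs_sqrt_coeff_Suc_le by (simp add: norm_minus_commute)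

lemma sqrt_one_minus_real_nonneg:
  fixes x :: real
  assumes "\<bar>x\<bar> \<le> 1"
  shows "sqrt_one_minus x \<ge> 0"
proof -
  have "norm (1 - sqrt_one_minus x) \<le> 1" using norm_one_minus_sqrt_one_minus[of x] assms by simp
  then show ?thesis by simp
qed

lemma sqrt_one_minus_real:
  fixes x :: real
  assumes "0 \<le> x" "x \<le> 1"
  shows "sqrt_one_minus x = sqrt (1 - x)"
proof -
  have "sqrt_one_minus x * sqrt_one_minus x = 1 - x" using sqrt_one_minus_square[of x] assms by simp
  moreover have "sqrt_one_minus x \<ge> 0" using sqrt_one_minus_real_nonneg[of x] assms by simp
  ultimately show ?thesis by (metis real_sqrt_abs2 abs_of_nonneg power2_eq_square)
qed

lemma abs_sqrt_coeff_partial_minus_abs: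
  fixes t :: real
  assumes "\<bar>t\<bar> \<le> 1"
  shows "\<bar>(\<Sum>k<n. sqrt_coeff k * (1 - t^2) ^ k) - \<bar>t\<bar>\<bar> \<le> (\<Sum>k. \<bar>sqrt_coeff (k + n)\<bar>)"
proof -
  have t2: "t^2 \<le> 1" using power2_le_of_abs_le[OF assms] by simp
  have z: "norm (1 - t^2) \<le> 1" using t2 by simp
  have "sqrt_one_minus (1 - t^2) = \<bar>t\<bar>" using t2 by (simp add: sqrt_one_minus_real)
  then show ?thesis using norm_sqrt_one_minus_minus_partial[OF z, of n] by (simp add: abs_minus_commute)
qed

lemma abs_one_minus_half_partial_le:
  fixes t :: real
  assumes "\<bar>t\<bar> \<le> 1"
  shows "\<bar>1 - ((\<Sum>k<n. sqrt_coeff k * (1 - t^2) ^ k) - t) / 2\<bar> \<le> 1 + (\<Sum>k. \<bar>sqrt_coeff (k + n)\<bar>) / 2"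
proof -
  define r where "r = (\<Sum>k<n. sqrt_coeff k * (1 - t^2) ^ k)"
  have "\<bar>r - \<bar>t\<bar>\<bar> \<le> (\<Sum>k. \<bar>sqrt_coeff (k + n)\<bar>)"
    unfolding r_def by (rule abs_sqrt_coeff_partial_minus_abs[OF assms])
  then show ?thesis
    using assms abs_ge_self[of t] abs_ge_minus_self[of t]
    unfolding r_def[symmetric] by (intro abs_leI) (auto simp: abs_le_iff field_simps)
qed

definition has_inverse :: "'a::monoid_mult \<Rightarrow> bool" where
  "has_inverse x \<longleftrightarrow> (\<exists>g. x * g = 1 \<and> g * x = 1)"

lemma has_inverse_scaleR:
  fixes x :: "'a::real_algebra_1"
  assumes "c \<noteq> 0" and "has_inverse x"
  shows "has_inverse (c *\<^sub>R x)"
proof -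
  obtain g where "x * g = 1" "g * x = 1"
    using assms(2) by (auto simp: has_inverse_def)
  then have "(c *\<^sub>R x) * ((1 / c) *\<^sub>R g) = 1" "((1 / c) *\<^sub>R g) * (c *\<^sub>R x) = 1"
    using assms(1) by simp_all
  then show ?thesis
    unfolding has_inverse_def by blast
qed

lemma neumann_series_has_inverse:
  fixes z :: "'a::{real_normed_algebra_1,banach}"
  assumes "norm z < 1"
  shows "has_inverse (1 - z)"
proof -
  have "summable (\<lambda>n. norm (z ^ n))"
    by (rule summable_norm_comparison_test[OF _ summable_geometric[of "norm z"]])
       (use assms in \<open>auto simp: norm_power_ineq\<close>)
  then have s: "summable (\<lambda>n. z ^ n)" by (rule summable_norm_cancel)
  have tel: "(\<lambda>n. z ^ n - z ^ Suc n) sums 1"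
    using telescope_sums'[OF LIMSEQ_power_zero[OF assms]] by simp
  define g where "g = (\<Sum>n. z ^ n)"
  have "(1 - z) * g = (\<Sum>n. (1 - z) * z ^ n)"
    by (simp add: g_def suminf_mult[OF s])
  also have "\<dots> = (\<Sum>n. z ^ n - z ^ Suc n)"
    by (simp add: algebra_simps)
  finally have "(1 - z) * g = (\<Sum>n. z ^ n - z ^ Suc n)" .
  moreover have "g * (1 - z) = (\<Sum>n. z ^ n * (1 - z))"
    by (simp add: g_def suminf_mult2[OF s])
  moreover have "\<dots> = (\<Sum>n. z ^ n - z ^ Suc n)"
    by (simp add: algebra_simps power_commutes)
  ultimately show ?thesis
    using tel by (auto simp: has_inverse_def sums_iff)
qed

lemma has_inverse_one_plus_mult_swap:
  fixes x y :: "'a::ring_1"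
  assumes "has_inverse (1 + x * y)"
  shows "has_inverse (1 + y * x)"
proof -
  obtain g where g: "(1 + x * y) * g = 1" "g * (1 + x * y) = 1"
    using assms by (auto simp: has_inverse_def)
  define h where "h = 1 - y * g * x"
  have "(1 + y * x) * h = 1 + y * x - y * ((1 + x * y) * g) * x"
    and "h * (1 + y * x) = 1 + y * x - y * (g * (1 + x * y)) * x"
    by (simp_all add: h_def algebra_simps)
  then show ?thesis
    using g unfolding has_inverse_def by auto
qed

lemma has_inverse_scalar_plus_mult_swap:
  fixes x y :: "'a::real_algebra_1"
  assumes "\<mu> \<noteq> 0" and "has_inverse (of_real \<mu> + x * y)"
  shows "has_inverse (of_real \<mu> + y * x)"
proof -
  define x' where "x' = (1 / \<mu>) *\<^sub>R x"
  have "of_real \<mu> + x * y = \<mu> *\<^sub>R (1 + x' * y)" and "of_real \<mu> + y * x = \<mu> *\<^sub>R (1 + y * x')"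
    using assms(1) by (simp_all add: x'_def scaleR_add_right of_real_def)
  moreover have "has_inverse (1 + x' * y)"
    using has_inverse_scaleR[of "1 / \<mu>" "of_real \<mu> + x * y"] assms calculation(1)
    by simp
  ultimately show ?thesis
    using has_inverse_scaleR[OF assms(1) has_inverse_one_plus_mult_swap] by simp
qed

context unital_cstar_algebra
begin

lemma scC_scaleR_left: "scC (r *\<^sub>R c) x = r *\<^sub>R scC c x"
  by (simp add: scaleR_conv_of_real scC_assoc[symmetric] scC_of_real)

lemma scC_scaleR_right: "scC c (r *\<^sub>R x) = r *\<^sub>R scC c x"
  by (simp add: scC_of_real[symmetric] scC_assoc mult.commute)

lemma bounded_linear_scC_left: "bounded_linear (\<lambda>c. scC c x)"
  by (rule bounded_linear_intro[where K="norm x"]) (auto simp: scC_add_left scC_scaleR_left norm_scC)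

lemma bounded_linear_scC: "bounded_linear (scC c)"
  by (rule bounded_linear_intro[where K="cmod c"]) (auto simp: scC_add_right scC_scaleR_right norm_scC)

lemmas scC_zero_left [simp] = linear_0[OF bounded_linear.linear[OF bounded_linear_scC_left]]
lemmas scC_minus_left = linear_neg[OF bounded_linear.linear[OF bounded_linear_scC_left]]
lemmas scC_zero_right [simp] = linear_0[OF bounded_linear.linear[OF bounded_linear_scC]]
lemmas scC_diff_right = linear_diff[OF bounded_linear.linear[OF bounded_linear_scC]]
lemmas scC_sum_right = linear_sum[OF bounded_linear.linear[OF bounded_linear_scC]]

lemma scC_one_mult: "scC c 1 * x = scC c x"
  by (simp add: scC_mult_left)

lemma mult_scC_one: "x * scC c 1 = scC c x"
  by (simp add: scC_mult_right)

lemma scC_of_real_one: "scC (complex_of_real r) 1 = of_real r"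
  by (subst scC_of_real) (simp add: of_real_def)

lemma star_scaleR: "star (r *\<^sub>R x) = r *\<^sub>R star x"
  using star_scC[of "of_real r" x] by (simp add: scC_of_real)

lemma norm_star [simp]: "norm (star x) = norm x"
proof -
  have le: "norm y \<le> norm (star y)" for y
  proof (cases "y = 0")
    case False
    have "norm y * norm y = norm (star y * y)" by (simp add: cstar_identity power2_eq_square)
    also have "\<dots> \<le> norm (star y) * norm y" by (rule norm_mult_ineq)
    finally show ?thesis using False by simp
  qed simp
  show ?thesis using le[of x] le[of "star x"] by (simp add: star_star)
qed

lemma bounded_linear_star: "bounded_linear star"
  by (rule bounded_linear_intro[where K=1]) (auto simp: star_add star_scaleR)

lemmas star_zero [simp] = linear_0[OF bounded_linear.linear[OF bounded_linear_star]]
lemmas star_minus = linear_neg[OF bounded_linear.linear[OF bounded_linear_star]]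
lemmas star_diff = linear_diff[OF bounded_linear.linear[OF bounded_linear_star]]
lemmas tendsto_star = bounded_linear.tendsto[OF bounded_linear_star]

lemma star_one [simp]: "star 1 = 1"
  using star_mult[of "star 1" 1] by (simp add: star_star)

lemma star_of_real [simp]: "star (of_real r) = of_real r"
  by (simp add: of_real_def star_scaleR)

lemma star_power: "star (x ^ n) = star x ^ n"
  by (induction n) (simp_all add: star_mult power_commutes)

lemma herm_star_mult_self: "star (star x * x) = star x * x"
  by (simp add: star_mult star_star)

lemma herm_norm_square: "star h = h \<Longrightarrow> norm (h * h) = (norm h)^2"
  using cstar_identity[of h] by simp

lemma herm_norm_power_pow2: "star h = h \<Longrightarrow> norm (h ^ (2^k)) = norm h ^ (2^k)"
proof (induction k)
  case (Suc k)
  have "star (h ^ (2^k)) = h ^ (2^k)" using Suc.prems by (simp add: star_power)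
  moreover have "h ^ (2 ^ Suc k) = h ^ (2^k) * h ^ (2^k)" by (simp add: power_add[symmetric] mult_2)
  ultimately have "norm (h ^ (2 ^ Suc k)) = (norm (h ^ (2^k)))^2" by (simp add: herm_norm_square)
  also have "\<dots> = norm h ^ (2 ^ Suc k)" using Suc by (simp add: power_mult[symmetric] mult.commute)
  finally show ?case .
qed simp

lemma peval_upto:
  assumes "degree p \<le> n"
  shows "peval scC p x = (\<Sum>i\<le>n. scC (coeff p i) (x ^ i))"
  unfolding peval_def
  by (rule sum.mono_neutral_left) (use assms in \<open>auto, metis coeff_eq_0 le_trans not_le scC_zero_left\<close>)

lemma peval_pCons: "peval scC (pCons c p) x = scC c 1 + x * peval scC p x"
proof -
  define n where "n = degree p"
  have d: "degree (pCons c p) \<le> Suc n" by (simp add: n_def degree_pCons_le)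
  have "peval scC (pCons c p) x = (\<Sum>i\<le>Suc n. scC (coeff (pCons c p) i) (x ^ i))"
    by (rule peval_upto[OF d])
  also have "\<dots> = scC c 1 + (\<Sum>i\<le>n. scC (coeff p i) (x ^ Suc i))"
    by (subst sum.atMost_Suc_shift) simp
  also have "(\<Sum>i\<le>n. scC (coeff p i) (x ^ Suc i)) = x * peval scC p x"
    by (simp add: peval_upto[of p n] n_def sum_distrib_left scC_mult_right)
  finally show ?thesis .
qed

lemma peval_0[simp]: "peval scC 0 x = 0"
  by (simp add: peval_def)

lemma peval_const[simp]: "peval scC [:c:] x = scC c 1"
  using peval_pCons[of c 0 x] by simp

lemma peval_1[simp]: "peval scC 1 x = 1"
  by (simp add: one_pCons scC_one del: pCons_one)

lemma peval_X[simp]: "peval scC [:0, 1:] x = x"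
  by (simp add: peval_pCons scC_one)

lemma peval_add: "peval scC (p + q) x = peval scC p x + peval scC q x"
proof -
  define n where "n = max (degree p) (degree q)"
  have "degree (p + q) \<le> n" "degree p \<le> n" "degree q \<le> n"
    by (auto simp: n_def degree_add_le)
  then show ?thesis
    by (simp add: peval_upto[of _ n] scC_add_left sum.distrib)
qed

lemma peval_smult: "peval scC (smult c p) x = scC c (peval scC p x)"
proof -
  have "degree (smult c p) \<le> degree p" by simp
  then show ?thesis
    by (simp add: peval_upto[of _ "degree p"] scC_sum_right scC_assoc)
qed

lemma peval_minus: "peval scC (- p) x = - peval scC p x"
  using peval_add[of p "-p" x] by (simp add: eq_neg_iff_add_eq_0 add.commute)

lemma peval_diff: "peval scC (p - q) x = peval scC p x - peval scC q x"
  using peval_add[of p "-q" x] peval_minus by simp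

lemma peval_sum: "peval scC (sum f A) x = (\<Sum>i\<in>A. peval scC (f i) x)"
  by (induction A rule: infinite_finite_induct) (auto simp: peval_add)

lemma peval_mult: "peval scC (p * q) x = peval scC p x * peval scC q x"
proof (induction p rule: pCons_induct)
  case (pCons c p)
  have "pCons c p * q = smult c q + pCons 0 (p * q)" by simp
  then have "peval scC (pCons c p * q) x = scC c (peval scC q x) + x * peval scC (p * q) x"
    by (simp add: peval_add peval_smult peval_pCons)
  also have "\<dots> = (scC c 1 + x * peval scC p x) * peval scC q x"
    using pCons.IH by (simp add: distrib_right scC_one_mult mult.assoc)
  finally show ?case by (simp add: peval_pCons)
qed simp

lemma peval_power: "peval scC (p ^ n) x = peval scC p x ^ n"
  by (induction n) (simp_all add: peval_mult)

lemma peval_pcompose: "peval scC (pcompose p q) x = peval scC p (peval scC q x)"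
  by (induction p rule: pCons_induct)
     (simp_all add: pcompose_pCons peval_add peval_mult peval_pCons scC_one_mult)

lemma peval_commute:
  assumes "x * y = y * x"
  shows "peval scC p x * y = y * peval scC p x"
proof (induction p rule: pCons_induct)
  case (pCons c p)
  have "(scC c 1 + x * peval scC p x) * y = y * (scC c 1 + x * peval scC p x)"
    using pCons.IH assms
    by (simp add: distrib_left distrib_right scC_one_mult mult_scC_one mult.assoc)
       (metis mult.assoc)
  then show ?case by (simp add: peval_pCons)
qed simp

lemma peval_commute_self: "peval scC p x * x = x * peval scC p x"
  by (rule peval_commute) simp

lemma star_peval: "star (peval scC p x) = peval scC (map_poly cnj p) (star x)"
proof (induction p rule: pCons_induct)
  case (pCons c p)
  have "star (scC c 1 + x * peval scC p x) = scC (cnj c) 1 + star x * star (peval scC p x)"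
  proof -
    have "star (x * peval scC p x) = star (peval scC p x * x)"
      by (simp add: peval_commute_self)
    then show ?thesis by (simp add: star_add star_scC star_mult)
  qed
  then show ?case using pCons.IH by (simp add: peval_pCons map_poly_pCons)
qed simp

lemma norm_peval_le: "norm (peval scC p x) \<le> (\<Sum>i\<le>degree p. cmod (coeff p i) * norm x ^ i)"
  unfolding peval_def
  by (rule order.trans[OF norm_sum sum_mono]) (simp add: norm_scC norm_power_ineq mult_left_mono)

lemma star_sqrt_one_minus:
  assumes "norm z \<le> 1"
  shows "star (sqrt_one_minus z) = sqrt_one_minus (star z)"
proof -
  have "star (sqrt_one_minus z) = (\<Sum>n. star (sqrt_coeff n *\<^sub>R z ^ n))"
    unfolding sqrt_one_minus_def
    by (rule bounded_linear.suminf[OF bounded_linear_star summable_sqrt_one_minus[OF assms]])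
  then show ?thesis by (simp add: sqrt_one_minus_def star_scaleR star_power)
qed

lemma herm_sqrt_one_minus: "star z = z \<Longrightarrow> norm z \<le> 1 \<Longrightarrow> star (sqrt_one_minus z) = sqrt_one_minus z"
  by (simp add: star_sqrt_one_minus)

definition iunit :: 'a where
  "iunit = scC \<i> 1"

lemma iunit_commute: "iunit * x = x * iunit"
  by (simp add: iunit_def scC_one_mult mult_scC_one)

lemma iunit_mult_iunit: "iunit * iunit = - 1"
  by (simp add: iunit_def scC_one_mult scC_assoc scC_minus_left scC_one)

lemma star_iunit: "star iunit = - iunit"
  by (simp add: iunit_def star_scC scC_minus_left)

lemma mult_iunit_left: "x * (iunit * y) = iunit * (x * y)"
proof -
  have "x * (iunit * y) = (x * iunit) * y" by (simp only: mult.assoc)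
  also have "\<dots> = (iunit * x) * y" by (simp only: iunit_commute)
  finally show ?thesis by (simp only: mult.assoc)
qed

lemma iunit_mult_mult_iunit: "(iunit * x) * (iunit * y) = - (x * y)"
proof -
  have "(iunit * x) * (iunit * y) = (iunit * iunit) * (x * y)"
    by (simp only: mult.assoc mult_iunit_left[of x y])
  then show ?thesis by (simp add: iunit_mult_iunit)
qed

lemma norm_power_le_one: "norm (x::'a) \<le> 1 \<Longrightarrow> norm (x ^ n) \<le> 1"
  by (rule order.trans[OF norm_power_ineq]) (simp add: power_le_one)

lemma norm_isometry:
  assumes "star u * u = 1"
  shows "norm u = 1"
  using cstar_identity[of u] assms norm_ge_zero[of u] by (auto simp: power2_eq_1_iff)

lemma norm_isometry_power_mult:
  assumes "star u * u = 1"
  shows "norm (u ^ n * x) = norm x"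
proof -
  have un: "norm (u ^ n) \<le> 1"
    using norm_power_le_one norm_isometry[OF assms] by simp
  then have sn: "norm (star u ^ n) \<le> 1"
    by (simp flip: star_power)
  have "star u ^ n * u ^ n = 1"
    by (induction n) (simp_all, metis assms mult.assoc mult.left_neutral power_commutes)
  then have "norm x = norm (star u ^ n * (u ^ n * x))"
    by (simp add: mult.assoc[symmetric])
  also have "\<dots> \<le> norm (u ^ n * x)"
    by (rule order.trans[OF norm_mult_ineq]) (use sn in \<open>simp add: mult_left_le_one_le\<close>)
  finally have "norm x \<le> norm (u ^ n * x)" .
  moreover have "norm (u ^ n * x) \<le> norm x"
    by (rule order.trans[OF norm_mult_ineq]) (use un in \<open>simp add: mult_left_le_one_le\<close>)
  ultimately show ?thesis by simp
qed

text \<open>The unitary \<open>u = h + i sqrt (1 - h\<^sup>2)\<close>, so that \<open>h = (u + u\<^sup>*) / 2\<close>.\<close>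

lemma cayley_unitary:
  assumes hh: "star h = h" and hn: "norm h \<le> 1"
  obtains u where "star u * u = 1" "u * h = h * u" "u * u + 1 = 2 * (u * h)"
proof -
  define s where "s = sqrt_one_minus (h * h)"
  have n2: "norm (h * h) \<le> 1"
    using herm_norm_square[OF hh] hn by (simp add: power_le_one)
  have sh: "star s = s"
    unfolding s_def by (rule herm_sqrt_one_minus) (use hh n2 in \<open>simp_all add: star_mult\<close>)
  have ss: "s * s = 1 - h * h"
    unfolding s_def by (rule sqrt_one_minus_square[OF n2])
  have hs: "h * s = s * h"
    unfolding s_def by (rule sqrt_one_minus_commute[OF n2]) (simp add: mult.assoc)
  define u where "u = h + iunit * s"
  have su: "star u = h - iunit * s"
  proof -
    have "star u = h + s * (- iunit)" by (simp add: u_def star_add star_mult sh hh star_iunit)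
    also have "s * (- iunit) = - (iunit * s)" by (simp add: iunit_commute)
    finally show ?thesis by simp
  qed
  have "star u * u = h * h + h * (iunit * s) - (iunit * s) * h - (iunit * s) * (iunit * s)"
    unfolding su by (simp add: u_def algebra_simps)
  also have "\<dots> = h * h + iunit * (h * s) - iunit * (s * h) + s * s"
    by (simp only: mult_iunit_left[of h s] mult.assoc[of iunit s h] iunit_mult_mult_iunit) simp
  finally have 1: "star u * u = 1"
    by (simp add: hs ss)
  have "u * star u = h * h - h * (iunit * s) + (iunit * s) * h - (iunit * s) * (iunit * s)"
    unfolding su by (simp add: u_def algebra_simps)
  also have "\<dots> = h * h - iunit * (h * s) + iunit * (s * h) + s * s"
    by (simp only: mult_iunit_left[of h s] mult.assoc[of iunit s h] iunit_mult_mult_iunit) simp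
  finally have 2: "u * star u = 1"
    by (simp add: hs ss)
  have "u * h = h * h + iunit * (s * h)"
    by (simp add: u_def distrib_right mult.assoc)
  also have "\<dots> = h * u"
    by (simp add: u_def distrib_left mult_iunit_left hs)
  finally have 3: "u * h = h * u" .
  have "u * u + 1 = u * (u + star u)"
    using 2 by (simp add: distrib_left)
  also have "u + star u = 2 * h"
    unfolding su by (simp add: u_def mult_2)
  finally have "u * u + 1 = 2 * (u * h)"
    by (simp add: mult_2 mult_2_right distrib_left)
  with 1 3 show ?thesis by (rule that)
qed

lemma peval_2X: "peval scC [:0, 2:] x = 2 *\<^sub>R x"
  using scC_of_real[of 2 x] by (simp add: peval_pCons mult_scC_one)

lemma peval_1X2: "peval scC [:1, 0, 1:] x = 1 + x * x"
  by (simp add: peval_pCons scC_one)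

lemma peval_cayley_poly:
  assumes "u * h = h * u" and "u * u + 1 = 2 * (u * h)"
  shows "peval scC (cayley_poly p) u = (2 *\<^sub>R u) ^ degree p * peval scC p h"
proof -
  define d where "d = degree p"
  define U where "U = 2 *\<^sub>R u"
  have Uh: "U * h = h * U"
    using assms(1) by (simp add: U_def)
  have one_uu: "1 + u * u = U * h"
    using assms(2) by (simp add: U_def scaleR_2 mult_2 add.commute distrib_right)
  have "peval scC (cayley_poly p) u = (\<Sum>n\<le>d. scC (coeff p n) (U ^ (d - n) * (1 + u * u) ^ n))"
    by (simp add: cayley_poly_def d_def U_def peval_sum peval_smult peval_mult peval_power
        peval_2X peval_1X2)
  also have "\<dots> = (\<Sum>n\<le>d. scC (coeff p n) (U ^ d * h ^ n))"
  proof (rule sum.cong)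
    fix n assume "n \<in> {..d}"
    then have "U ^ (d - n) * (U * h) ^ n = U ^ d * h ^ n"
      by (simp add: power_mult_distrib_commuting[OF Uh] mult.assoc[symmetric] power_add[symmetric])
    then show "scC (coeff p n) (U ^ (d - n) * (1 + u * u) ^ n) = scC (coeff p n) (U ^ d * h ^ n)"
      by (simp only: one_uu)
  qed simp
  also have "\<dots> = U ^ d * peval scC p h"
    by (simp add: peval_upto[of p d] d_def sum_distrib_left scC_mult_right)
  finally show ?thesis by (simp add: U_def d_def)
qed

lemma norm_peval_le_sum_coeff:
  assumes "norm x \<le> 1"
  shows "norm (peval scC q x) \<le> (\<Sum>i\<le>degree q. cmod (coeff q i))"
proof -
  have "norm (peval scC q x) \<le> (\<Sum>i\<le>degree q. cmod (coeff q i) * norm x ^ i)"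
    by (rule norm_peval_le)
  also have "\<dots> \<le> (\<Sum>i\<le>degree q. cmod (coeff q i))"
    by (rule sum_mono) (use assms in \<open>simp add: mult_left_le power_le_one\<close>)
  finally show ?thesis .
qed

text \<open>\<open>(2u)\<^sup>d p(h)\<close>, which has norm \<open>2\<^sup>d \<parallel>p(h)\<parallel>\<close>, is \<open>cayley_poly p\<close> evaluated at the unitary \<open>u\<close>,
  and the coefficients of \<open>cayley_poly p\<close> are bounded by Cauchy's inequality on the unit circle.\<close>

lemma herm_peval_norm_le_degree_bound:
  assumes hh: "star h = h" and hn: "norm h \<le> 1"
    and pb: "\<And>t. -1 \<le> t \<Longrightarrow> t \<le> 1 \<Longrightarrow> cmod (poly p (of_real t)) \<le> M"
  shows "norm (peval scC p h) \<le> (2 * real (degree p) + 1) * M"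
proof -
  obtain u where u: "star u * u = 1" and uh: "u * h = h * u" and uu: "u * u + 1 = 2 * (u * h)"
    using cayley_unitary[OF hh hn] by blast
  define d where "d = degree p"
  have M0: "M \<ge> 0"
    using order.trans[OF norm_ge_zero pb[of 0]] by simp
  have coeff_le: "cmod (coeff (cayley_poly p) i) \<le> 2 ^ d * M" for i
  proof (rule norm_coeff_le_of_circle_bound)
    fix z :: complex assume z: "cmod z = 1"
    have "\<bar>Re z\<bar> \<le> 1" using abs_Re_le_cmod[of z] z by simp
    then have "cmod (poly p (of_real (Re z))) \<le> M" using pb by auto
    then show "cmod (poly (cayley_poly p) z) \<le> 2 ^ d * M"
      by (simp add: poly_cayley_poly_circle[OF z] norm_mult norm_power z d_def mult_left_mono)
  qed
  have "2 ^ d * norm (peval scC p h) = norm (peval scC (cayley_poly p) u)"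
    by (simp add: peval_cayley_poly[OF uh uu] norm_isometry_power_mult[OF u] d_def mult.assoc[symmetric])
  also have "\<dots> \<le> (\<Sum>i\<le>degree (cayley_poly p). cmod (coeff (cayley_poly p) i))"
    using norm_isometry[OF u] by (intro norm_peval_le_sum_coeff) simp
  also have "\<dots> \<le> (\<Sum>i\<le>degree (cayley_poly p). 2 ^ d * M)"
    by (intro sum_mono coeff_le)
  also have "\<dots> \<le> 2 ^ d * ((2 * real d + 1) * M)"
    using degree_cayley_poly[of p] M0 by (simp add: d_def mult_right_mono)
  finally show ?thesis by (simp add: d_def)
qed

lemma herm_peval_norm_le_unit:
  assumes hh: "star h = h" and hn: "norm h \<le> 1"
    and pb: "\<And>t. -1 \<le> t \<Longrightarrow> t \<le> 1 \<Longrightarrow> cmod (poly p (of_real t)) \<le> M"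
  shows "norm (peval scC p h) \<le> M"
proof -
  have M0: "M \<ge> 0"
    using order.trans[OF norm_ge_zero pb[of 0]] by simp
  define x where "x = peval scC p h"
  define r where "r = map_poly cnj p * p"
  have y: "star x * x = peval scC r h" by (simp add: x_def r_def star_peval hh peval_mult)
  have pr: "cmod (poly r (of_real t)) = (cmod (poly p (of_real t)))^2" for t
  proof -
    have "poly (map_poly cnj p) (of_real t) = cnj (poly p (of_real t))"
      using poly_cnj[of p "of_real t"] by simp
    then show ?thesis by (simp add: r_def norm_mult power2_eq_square)
  qed
  have "norm (star x * x) \<le> M^2"
  proof (rule le_of_pow2_bound[where C = "2 * real (degree r)"])
    fix k :: nat
    have "norm (star x * x) ^ (2^k) = norm ((star x * x) ^ (2^k))"
      by (rule herm_norm_power_pow2[OF herm_star_mult_self, symmetric])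
    also have "\<dots> = norm (peval scC (r ^ (2^k)) h)" by (simp add: y peval_power)
    also have "\<dots> \<le> (2 * real (degree (r ^ (2^k))) + 1) * (M^2) ^ (2^k)"
    proof (rule herm_peval_norm_le_degree_bound[OF hh hn])
      fix t :: real assume "-1 \<le> t" "t \<le> 1"
      then have "cmod (poly p (of_real t)) \<le> M" by (rule pb)
      then have "cmod (poly r (of_real t)) \<le> M^2" by (simp add: pr power_mono)
      then show "cmod (poly (r ^ (2^k)) (of_real t)) \<le> (M^2) ^ (2^k)"
        by (simp add: norm_power power_mono)
    qed
    also have "\<dots> \<le> (2 * real (degree r) * 2^k + 1) * (M^2) ^ (2^k)"
    proof (rule mult_right_mono)
      have "degree (r ^ (2^k)) \<le> degree r * 2^k" by (rule degree_power_le)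
      then have "real (degree (r ^ (2^k))) \<le> real (degree r) * 2^k" by (metis of_nat_le_iff of_nat_mult of_nat_numeral of_nat_power)
      then show "2 * real (degree (r ^ (2^k))) + 1 \<le> 2 * real (degree r) * 2^k + 1" by simp
    qed (use M0 in simp)
    finally show "norm (star x * x) ^ (2^k) \<le> (2 * real (degree r) * 2^k + 1) * (M^2) ^ (2^k)" .
  qed (use M0 in auto)
  then have "(norm x)^2 \<le> M^2" by (simp add: cstar_identity)
  then show ?thesis using M0 by (simp add: x_def power2_le_iff_abs_le)
qed

lemma peval_at_0: "peval scC p 0 = scC (poly p 0) 1"
  by (simp add: peval_upto[of p "degree p"] atMost_Suc_eq_insert_0 zero_power poly_0_coeff_0
       sum.atMost_shift del: sum.atMost_Suc)

lemma herm_peval_norm_le: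
  assumes hh: "star h = h"
    and pb: "\<And>t. \<bar>t\<bar> \<le> norm h \<Longrightarrow> cmod (poly p (of_real t)) \<le> M"
  shows "norm (peval scC p h) \<le> M"
proof (cases "h = 0")
  case True
  then show ?thesis using pb[of 0] by (simp add: peval_at_0 norm_scC)
next
  case False
  define \<rho> where "\<rho> = norm h"
  have \<rho>: "\<rho> > 0" using False by (simp add: \<rho>_def)
  define h' where "h' = (1 / \<rho>) *\<^sub>R h"
  have h'h: "star h' = h'" by (simp add: h'_def star_scaleR hh)
  have h'n: "norm h' \<le> 1" using \<rho> by (simp add: h'_def \<rho>_def)
  define p' where "p' = pcompose p [:0, of_real \<rho>:]"
  have "peval scC p' h' = peval scC p (scC (of_real \<rho>) h')"
    by (simp add: p'_def peval_pcompose peval_pCons mult_scC_one)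
  also have "scC (of_real \<rho>) h' = h" using \<rho> by (simp add: scC_of_real h'_def)
  finally have e: "peval scC p' h' = peval scC p h" .
  have "norm (peval scC p' h') \<le> M"
  proof (rule herm_peval_norm_le_unit[OF h'h h'n])
    fix t :: real assume "-1 \<le> t" "t \<le> 1"
    then have "\<bar>\<rho> * t\<bar> \<le> norm h" using \<rho> by (simp add: \<rho>_def abs_mult mult_left_le)
    then have "cmod (poly p (of_real (\<rho> * t))) \<le> M" by (rule pb)
    then show "cmod (poly p' (of_real t)) \<le> M" by (simp add: p'_def poly_pcompose mult.commute)
  qed
  then show ?thesis using e by simp
qed

section \<open>Positive elements and Kaplansky's theorem\<close>

text \<open>Positivity without reference to the spectrum: \<open>\<sigma>(a) \<subseteq> [0, R]\<close> iff \<open>\<parallel>R - a\<parallel> \<le> R\<close> for Hermitian \<open>a\<close>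
  and \<open>R \<ge> \<parallel>a\<parallel>\<close>.\<close>

definition positive_element :: "'a \<Rightarrow> bool" where
  "positive_element a \<longleftrightarrow> star a = a \<and> (\<exists>R\<ge>0. norm (of_real R - a) \<le> R)"

lemma positive_elementE:
  assumes "positive_element a"
  obtains R k where "R \<ge> 0" "star k = k" "a = R *\<^sub>R (k * k)" "norm a = R * (norm k)^2"
proof -
  from assms obtain R where ah: "star a = a" and R0: "R \<ge> 0" and n: "norm (of_real R - a) \<le> R"
    by (auto simp: positive_element_def)
  show ?thesis
  proof (cases "R = 0")
    case True
    then have "a = 0" using n by simp
    then show ?thesis by (intro that[of 0 0]) auto
  next
    case False
    then have R: "R > 0" using R0 by simp
    define z where "z = (1 / R) *\<^sub>R (of_real R - a)"
    have "norm z = norm (of_real R - a) / R" using R unfolding z_def norm_scaleR by simp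
    then have zn: "norm z \<le> 1" using n R by simp
    have zh: "star z = z" by (simp add: z_def star_scaleR star_diff ah)
    define s where "s = sqrt_one_minus z"
    have sh: "star s = s" by (simp add: s_def herm_sqrt_one_minus[OF zh zn])
    have ss: "s * s = 1 - z" by (simp add: s_def sqrt_one_minus_square[OF zn])
    have oR: "(1 / R) *\<^sub>R (of_real R :: 'a) = 1" using R by (simp add: of_real_def)
    have "1 - z = (1 / R) *\<^sub>R a" by (simp add: z_def scaleR_diff_right oR)
    then have a: "a = R *\<^sub>R (s * s)" using R by (simp add: ss)
    have "norm a = R * (norm s)^2" using R by (simp add: a herm_norm_square[OF sh])
    then show ?thesis using that[OF R0 sh a] by simp
  qed
qed

lemma peval_RX2: "peval scC [:0, 0, complex_of_real R:] k = R *\<^sub>R (k * k)"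
  by (simp add: peval_pCons scC_of_real mult_scC_one)

lemma positive_peval_norm_le:
  assumes "positive_element a"
    and pb: "\<And>t. 0 \<le> t \<Longrightarrow> t \<le> norm a \<Longrightarrow> cmod (poly q (of_real t)) \<le> M"
  shows "norm (peval scC q a) \<le> M"
proof -
  obtain R k where R0: "R \<ge> 0" and kh: "star k = k" and a: "a = R *\<^sub>R (k * k)"
    and na: "norm a = R * (norm k)^2"
    using positive_elementE[OF assms(1)] by blast
  have "peval scC q a = peval scC (pcompose q [:0, 0, complex_of_real R:]) k"
    by (simp add: peval_pcompose peval_RX2 a)
  also have "norm \<dots> \<le> M"
  proof (rule herm_peval_norm_le[OF kh])
    fix t :: real assume t: "\<bar>t\<bar> \<le> norm k"
    have "t^2 \<le> (norm k)^2" using t by (rule power2_le_of_abs_le)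
    then have "R * t^2 \<le> norm a" using R0 na by (simp add: mult_left_mono)
    moreover have "0 \<le> R * t^2" using R0 by simp
    ultimately have "cmod (poly q (of_real (R * t^2))) \<le> M" using pb by blast
    then show "cmod (poly (pcompose q [:0, 0, complex_of_real R:]) (of_real t)) \<le> M"
      by (simp add: poly_pcompose power2_eq_square algebra_simps)
  qed
  finally show ?thesis .
qed

lemma positive_element_0 [simp]: "positive_element 0"
  by (auto simp: positive_element_def)

lemma positive_element_add:
  assumes "positive_element a" and "positive_element b"
  shows "positive_element (a + b)"
proof -
  obtain R1 R2 where "star a = a" "star b = b" "R1 \<ge> 0" "R2 \<ge> 0"
    "norm (of_real R1 - a) \<le> R1" "norm (of_real R2 - b) \<le> R2"
    using assms by (auto simp: positive_element_def)
  moreover have "of_real (R1 + R2) - (a + b) = (of_real R1 - a) + (of_real R2 - b)"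
    by simp
  then have "norm (of_real (R1 + R2) - (a + b)) \<le> norm (of_real R1 - a) + norm (of_real R2 - b)"
    by (metis norm_triangle_ineq)
  ultimately show ?thesis
    unfolding positive_element_def by (intro conjI exI[of _ "R1 + R2"]) (auto simp: star_add)
qed

lemma positive_element_scaleR:
  assumes "c \<ge> 0" and "positive_element a"
  shows "positive_element (c *\<^sub>R a)"
proof -
  obtain R where "star a = a" "R \<ge> 0" "norm (of_real R - a) \<le> R"
    using assms(2) by (auto simp: positive_element_def)
  moreover have "of_real (c * R) - c *\<^sub>R a = c *\<^sub>R (of_real R - a)"
    by (simp add: scaleR_diff_right of_real_def)
  ultimately show ?thesis
    unfolding positive_element_def using assms(1)
    by (intro conjI exI[of _ "c * R"]) (auto simp: star_scaleR mult_left_mono)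
qed

lemma peval_R_minus_X2: "peval scC [:complex_of_real R, 0, -1:] h = of_real R - h * h"
  by (simp add: peval_pCons scC_of_real scC_minus_left scC_one scaleR_conv_of_real)

lemma positive_element_herm_square:
  assumes hh: "star h = h"
  shows "positive_element (h * h)"
proof -
  define R where "R = (norm h)^2"
  have "norm (peval scC [:complex_of_real R, 0, -1:] h) \<le> R"
  proof (rule herm_peval_norm_le[OF hh])
    fix t :: real assume "\<bar>t\<bar> \<le> norm h"
    then have "t^2 \<le> R" unfolding R_def by (rule power2_le_of_abs_le)
    have e: "poly [:complex_of_real R, 0, -1:] (of_real t) = of_real (R - t^2)" by (simp add: power2_eq_square)
    have "\<bar>R - t^2\<bar> \<le> R" using \<open>t^2 \<le> R\<close> by (simp add: abs_le_iff)
    then show "cmod (poly [:complex_of_real R, 0, -1:] (of_real t)) \<le> R"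
      by (simp only: e norm_of_real)
  qed
  then have "norm (of_real R - h * h) \<le> R" by (simp only: peval_R_minus_X2)
  then show ?thesis unfolding positive_element_def
    by (auto simp: star_mult hh R_def intro!: exI[of _ R])
qed

lemma positive_element_plus_has_inverse:
  assumes "positive_element a" "\<mu> > 0"
  shows "has_inverse (of_real \<mu> + a)"
proof -
  obtain R where R0: "R \<ge> 0" and n: "norm (of_real R - a) \<le> R"
    using assms(1) by (auto simp: positive_element_def)
  define z where "z = (1 / (\<mu> + R)) *\<^sub>R (of_real R - a)"
  have "norm z \<le> R / (\<mu> + R)"
    using n R0 assms(2) by (simp add: z_def divide_right_mono)
  also have "\<dots> < 1"
    using R0 assms(2) by simp
  finally have "has_inverse ((\<mu> + R) *\<^sub>R (1 - z))"
    using R0 assms(2) by (intro has_inverse_scaleR neumann_series_has_inverse) auto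
  moreover have "(\<mu> + R) *\<^sub>R (1 - z) = of_real \<mu> + a"
    using R0 assms(2) by (simp add: z_def scaleR_diff_right of_real_def scaleR_add_left)
  ultimately show ?thesis by simp
qed

lemma peval_power_mult_sq_diff:
  "peval scC ([:0, 1:] ^ N * [:complex_of_real (\<rho>^2), 0, -1:]) w
     = w ^ N * ((of_real \<rho> - w) * (of_real \<rho> + w))"
proof -
  have "of_real \<rho> * w = w * of_real \<rho>"
    by (simp add: of_real_def)
  then have "(of_real \<rho> - w) * (of_real \<rho> + w) = of_real (\<rho>^2) - w * w"
    by (simp add: algebra_simps power2_eq_square)
  then show ?thesis
    by (simp only: peval_mult peval_power peval_X peval_R_minus_X2)
qed

lemma norm_herm_power_mult_sq_diff_le:
  assumes "star w = w"
  shows "norm (w ^ N * ((of_real (norm w) - w) * (of_real (norm w) + w)))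
    \<le> 2 * norm w ^ (N + 2) / real (Suc N)"
  unfolding peval_power_mult_sq_diff[symmetric]
proof (rule herm_peval_norm_le[OF assms])
  fix t :: real assume "\<bar>t\<bar> \<le> norm w"
  then have "\<bar>t ^ N * ((norm w)^2 - t^2)\<bar> \<le> 2 * norm w ^ (N + 2) / real (Suc N)"
    by (rule abs_power_mult_sq_diff_le)
  moreover have "poly ([:0, 1:] ^ N * [:complex_of_real ((norm w)^2), 0, -1:]) (of_real t)
      = of_real (t ^ N * ((norm w)^2 - t^2))"
    by (simp add: power2_eq_square algebra_simps)
  ultimately show "cmod (poly ([:0, 1:] ^ N * [:complex_of_real ((norm w)^2), 0, -1:]) (of_real t))
      \<le> 2 * norm w ^ (N + 2) / real (Suc N)"
    by (simp only: norm_of_real)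
qed

text \<open>For \<open>\<rho> = \<parallel>w\<parallel>\<close> the C*-identity gives \<open>\<parallel>w\<^sup>N\<parallel> = \<rho>\<^sup>N\<close> when \<open>N\<close> is a power of 2, while
  \<open>w\<^sup>N (\<rho> - w) (\<rho> + w)\<close> has norm \<open>O(\<rho>\<^sup>N\<^sup>+\<^sup>2 / N)\<close>; two inverses bound the ratio.\<close>

lemma herm_eq_0_of_has_inverse:
  assumes wh: "star w = w"
    and inv_plus: "has_inverse (of_real (norm w) + w)"
    and inv_minus: "has_inverse (of_real (norm w) - w)"
  shows "w = 0"
proof (rule ccontr)
  assume "w \<noteq> 0"
  define \<rho> where "\<rho> = norm w"
  have \<rho>: "\<rho> > 0" using \<open>w \<noteq> 0\<close> by (simp add: \<rho>_def)
  obtain g1 g2 where g1: "(of_real \<rho> + w) * g1 = 1" and g2: "(of_real \<rho> - w) * g2 = 1"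
    using inv_plus inv_minus by (auto simp: has_inverse_def \<rho>_def)
  define G where "G = norm g1 * norm g2"
  have bound: "real (Suc N) \<le> 2 * \<rho>^2 * G" if N: "N = 2^k" for N k
  proof -
    define P where "P = w ^ N * ((of_real \<rho> - w) * (of_real \<rho> + w))"
    have "P * g1 * g2 = w ^ N"
      by (simp add: P_def mult.assoc g1 g2)
    then have "\<rho> ^ N = norm (P * g1 * g2)"
      by (simp add: N \<rho>_def herm_norm_power_pow2[OF wh])
    also have "\<dots> \<le> norm P * G"
      using norm_mult_ineq[of "P * g1" g2] mult_right_mono[OF norm_mult_ineq[of P g1] norm_ge_zero[of g2]]
      by (simp add: G_def mult.assoc)
    also have "\<dots> \<le> 2 * \<rho> ^ (N + 2) / real (Suc N) * G"
      unfolding P_def \<rho>_def G_def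
      by (intro mult_right_mono norm_herm_power_mult_sq_diff_le[OF wh]) simp
    finally have "\<rho> ^ N * real (Suc N) \<le> \<rho> ^ N * (2 * \<rho>^2 * G)"
      by (simp add: field_simps power_add power2_eq_square mult_ac)
    then show ?thesis using \<rho> by simp
  qed
  obtain k where "2 * \<rho>^2 * G < (2::real) ^ k"
    using real_arch_pow[of 2 "2 * \<rho>^2 * G"] by auto
  with bound[of "2^k" k] show False by simp
qed

lemma peval_1_minus_X2: "peval scC [:1, 0, -1:] h = 1 - h * h"
  using peval_R_minus_X2[of 1 h] by simp

lemma herm_norm_one_minus_square_le:
  assumes ch: "star c = c" and cn: "norm c \<le> 1"
  shows "norm (1 - c * c) \<le> 1"
proof -
  have "norm (peval scC [:1, 0, -1:] c) \<le> 1"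
  proof (rule herm_peval_norm_le[OF ch])
    fix t :: real assume "\<bar>t\<bar> \<le> norm c"
    then have "t^2 \<le> 1" using power2_le_of_abs_le[of t 1] cn by simp
    moreover have e: "poly [:1, 0, -1:] (complex_of_real t) = complex_of_real (1 - t^2)"
      by (simp add: power2_eq_square)
    ultimately show "cmod (poly [:1, 0, -1:] (of_real t)) \<le> 1"
      by (simp only: e norm_of_real) simp
  qed
  then show ?thesis by (simp add: peval_1_minus_X2)
qed

definition herm_abs :: "'a \<Rightarrow> 'a" where
  "herm_abs c = sqrt_one_minus (1 - c * c)"

lemma herm_abs:
  assumes ch: "star c = c" and cn: "norm c \<le> 1"
  shows "star (herm_abs c) = herm_abs c" and "herm_abs c * herm_abs c = c * c"
    and "c * herm_abs c = herm_abs c * c" and "positive_element (herm_abs c)"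
proof -
  have zn: "norm (1 - c * c) \<le> 1" and zh: "star (1 - c * c) = 1 - c * c"
    using herm_norm_one_minus_square_le[OF ch cn] by (simp_all add: star_diff star_mult ch)
  show "star (herm_abs c) = herm_abs c"
    unfolding herm_abs_def by (rule herm_sqrt_one_minus[OF zh zn])
  show "herm_abs c * herm_abs c = c * c"
    unfolding herm_abs_def sqrt_one_minus_square[OF zn] by simp
  show "c * herm_abs c = herm_abs c * c"
    unfolding herm_abs_def by (rule sqrt_one_minus_commute[OF zn]) (simp add: algebra_simps)
  then show "positive_element (herm_abs c)"
    using norm_one_minus_sqrt_one_minus[OF zn] \<open>star (herm_abs c) = herm_abs c\<close>
    unfolding positive_element_def herm_abs_def by (auto intro!: exI[of _ 1])
qed

text \<open>The negative part \<open>(|c| - c) / 2\<close> is a norm limit of polynomials \<open>q\<^sub>n(c)\<close> whose values on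
  \<open>[-1, 1]\<close> approach \<open>(|t| - t) / 2 \<in> [0, 1]\<close>.\<close>

lemma norm_one_minus_negative_part_partial_le:
  assumes ch: "star c = c" and cn: "norm c \<le> 1"
  shows "norm (1 - (1/2) *\<^sub>R ((\<Sum>k<n. sqrt_coeff k *\<^sub>R (1 - c * c) ^ k) - c))
    \<le> 1 + (\<Sum>k. \<bar>sqrt_coeff (k + n)\<bar>) / 2"
proof -
  define q :: "complex poly"
    where "q = 1 - smult (1/2) ((\<Sum>k<n. smult (of_real (sqrt_coeff k)) ([:1, 0, -1:] ^ k)) - [:0, 1:])"
  have "peval scC q c = 1 - (1/2) *\<^sub>R ((\<Sum>k<n. sqrt_coeff k *\<^sub>R (1 - c * c) ^ k) - c)"
    using scC_of_real[of "1/2"]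
    by (simp add: q_def peval_diff peval_smult peval_sum peval_power peval_1_minus_X2 scC_of_real)
  moreover have "norm (peval scC q c) \<le> 1 + (\<Sum>k. \<bar>sqrt_coeff (k + n)\<bar>) / 2"
  proof (rule herm_peval_norm_le[OF ch])
    fix t :: real assume "\<bar>t\<bar> \<le> norm c"
    then have "\<bar>t\<bar> \<le> 1" using cn by simp
    moreover have "poly q (of_real t) = of_real (1 - ((\<Sum>k<n. sqrt_coeff k * (1 - t^2) ^ k) - t) / 2)"
      by (simp add: q_def poly_sum power2_eq_square)
    ultimately show "cmod (poly q (of_real t)) \<le> 1 + (\<Sum>k. \<bar>sqrt_coeff (k + n)\<bar>) / 2"
      using abs_one_minus_half_partial_le by (simp only: norm_of_real)
  qed
  ultimately show ?thesis by simp
qed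

lemma positive_element_negative_part:
  assumes ch: "star c = c" and cn: "norm c \<le> 1"
  shows "positive_element ((1/2) *\<^sub>R (herm_abs c - c))"
proof -
  define v where "v = (1/2) *\<^sub>R (herm_abs c - c)"
  define tail where "tail n = (\<Sum>k. \<bar>sqrt_coeff (k + n)\<bar>)" for n
  define vn where "vn n = (1/2) *\<^sub>R ((\<Sum>k<n. sqrt_coeff k *\<^sub>R (1 - c * c) ^ k) - c)" for n
  have zn: "norm (1 - c * c) \<le> 1"
    by (rule herm_norm_one_minus_square_le[OF ch cn])
  have "vn \<longlonglongrightarrow> v"
    unfolding vn_def v_def herm_abs_def sqrt_one_minus_def
    by (intro tendsto_intros summable_LIMSEQ[OF summable_sqrt_one_minus[OF zn]])
  then have "(\<lambda>n. norm (1 - vn n)) \<longlonglongrightarrow> norm (1 - v)"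
    by (intro tendsto_intros)
  moreover have "(\<lambda>n. 1 + tail n / 2) \<longlonglongrightarrow> 1"
    using tendsto_add[OF tendsto_const tendsto_divide[OF sqrt_coeff_tail_tendsto_0 tendsto_const]]
    by (simp add: tail_def)
  moreover have "norm (1 - vn n) \<le> 1 + tail n / 2" for n
    unfolding vn_def tail_def by (rule norm_one_minus_negative_part_partial_le[OF ch cn])
  ultimately have "norm (1 - v) \<le> 1"
    by (intro LIMSEQ_le) auto
  moreover have "star v = v"
    using herm_abs(1)[OF ch cn] by (simp add: v_def star_scaleR star_diff ch)
  ultimately show ?thesis
    unfolding v_def[symmetric] positive_element_def by (auto intro!: exI[of _ 1])
qed

lemma herm_mult_negative_part:
  assumes ch: "star c = c" and cn: "norm c \<le> 1"
  shows "c * ((1/2) *\<^sub>R (herm_abs c - c))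
    = - ((1/2) *\<^sub>R (herm_abs c - c) * ((1/2) *\<^sub>R (herm_abs c - c)))"
proof -
  have "(herm_abs c - c) * (herm_abs c - c) = 2 *\<^sub>R (c * c - c * herm_abs c)"
    using herm_abs(2,3)[OF ch cn] by (simp add: algebra_simps scaleR_2)
  then have "(1/2) *\<^sub>R (herm_abs c - c) * ((1/2) *\<^sub>R (herm_abs c - c))
      = (1/2) *\<^sub>R (c * c - c * herm_abs c)"
    by simp
  moreover have "c * ((1/2) *\<^sub>R (herm_abs c - c)) = (1/2) *\<^sub>R (c * herm_abs c - c * c)"
    by (simp add: algebra_simps)
  ultimately show ?thesis
    by (metis minus_diff_eq scaleR_minus_right)
qed

lemma positive_element_cube:
  assumes "positive_element v"
  shows "positive_element (v * (v * v))"
proof -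
  define r where "r = (norm v)^3"
  have "norm (peval scC [:complex_of_real r, 0, 0, -1:] v) \<le> r"
  proof (rule positive_peval_norm_le[OF assms])
    fix t :: real assume t: "0 \<le> t" "t \<le> norm v"
    then have "0 \<le> t^3" "t^3 \<le> r"
      by (simp_all add: r_def power_mono)
    moreover have "poly [:complex_of_real r, 0, 0, -1:] (of_real t) = complex_of_real (r - t^3)"
      by (simp add: power3_eq_cube)
    ultimately show "cmod (poly [:complex_of_real r, 0, 0, -1:] (of_real t)) \<le> r"
      by (simp only: norm_of_real)
  qed
  moreover have "peval scC [:complex_of_real r, 0, 0, -1:] v = of_real r - v * (v * v)"
    by (simp add: peval_pCons scC_of_real_one scC_minus_left scC_one mult.assoc)
  moreover have "star (v * (v * v)) = v * (v * v)"
    using assms by (simp add: positive_element_def star_mult mult.assoc)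
  ultimately show ?thesis
    unfolding positive_element_def by (auto intro!: exI[of _ r] simp: r_def)
qed

lemma positive_element_mult_star_plus_star_mult:
  "positive_element (x * star x + star x * x)"
proof -
  define s where "s = x + star x"
  define t where "t = iunit * (star x - x)"
  have sh: "star s = s"
    by (simp add: s_def star_add star_star add.commute)
  have "star t = (x - star x) * (- iunit)"
    by (simp add: t_def star_mult star_diff star_star star_iunit)
  then have th: "star t = t"
    by (simp add: t_def iunit_commute algebra_simps)
  have "t * t = - ((star x - x) * (star x - x))"
    by (simp only: t_def iunit_mult_mult_iunit)
  then have "s * s + t * t = 2 *\<^sub>R (x * star x + star x * x)"
    by (simp add: s_def algebra_simps scaleR_2)
  then have "x * star x + star x * x = (1/2) *\<^sub>R (s * s) + (1/2) *\<^sub>R (t * t)"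
    by (simp flip: scaleR_add_right)
  then show ?thesis
    by (simp add: positive_element_add positive_element_scaleR positive_element_herm_square sh th)
qed

text \<open>Let \<open>v\<close> be the negative part of \<open>c = b\<^sup>* b\<close> and \<open>x = b v\<close>. Then
  \<open>x\<^sup>* x = v c v = -v\<^sup>3\<close>, so \<open>x x\<^sup>* = (x x\<^sup>* + x\<^sup>* x) + v\<^sup>3\<close> is positive and \<open>\<mu> + x x\<^sup>*\<close> is invertible
  for \<open>\<mu> > 0\<close>; by Jacobson's lemma so is \<open>\<mu> - v\<^sup>3\<close>. Since \<open>v\<^sup>3\<close> is positive, \<open>\<mu> + v\<^sup>3\<close> is invertible
  too, which forces \<open>v\<^sup>3 = 0\<close>, hence \<open>v = 0\<close> and \<open>c = |c|\<close>.\<close>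

lemma positive_element_star_mult_contraction:
  assumes "norm (star b * b) \<le> 1"
  shows "positive_element (star b * b)"
proof -
  define c where "c = star b * b"
  have ch: "star c = c" and cn: "norm c \<le> 1"
    using assms by (simp_all add: c_def herm_star_mult_self)
  define v where "v = (1/2) *\<^sub>R (herm_abs c - c)"
  have vpos: "positive_element v" and vh: "star v = v"
    using positive_element_negative_part[OF ch cn] by (simp_all add: v_def positive_element_def)
  have cv: "c * v = - (v * v)"
    unfolding v_def by (rule herm_mult_negative_part[OF ch cn])
  define w where "w = v * (v * v)"
  have wpos: "positive_element w" and wh: "star w = w"
    using positive_element_cube[OF vpos] by (simp_all add: w_def positive_element_def)
  define x where "x = b * v"
  have "star x * x = v * (c * v)"
    by (simp add: x_def c_def star_mult vh mult.assoc)
  then have xsx: "star x * x = - w"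
    by (simp add: cv w_def)
  then have "positive_element (x * star x)"
    using positive_element_add[OF positive_element_mult_star_plus_star_mult[of x] wpos] by simp
  then have "has_inverse (of_real (norm w) + x * star x)" if "w \<noteq> 0"
    using that by (intro positive_element_plus_has_inverse) auto
  then have "has_inverse (of_real (norm w) - w)" if "w \<noteq> 0"
    using that has_inverse_scalar_plus_mult_swap[of "norm w" x "star x"] by (simp add: xsx)
  moreover have "has_inverse (of_real (norm w) + w)" if "w \<noteq> 0"
    using that by (intro positive_element_plus_has_inverse wpos) auto
  ultimately have "w = 0"
    using herm_eq_0_of_has_inverse[OF wh] by blast
  then have "norm v ^ (2^2) = 0"
    using herm_norm_power_pow2[OF vh, of 2] by (simp add: w_def numeral_eq_Suc mult.assoc)
  then have "herm_abs c = c"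
    by (simp add: v_def)
  then show ?thesis
    using herm_abs(4)[OF ch cn] by (simp add: c_def)
qed

lemma positive_element_star_mult: "positive_element (star b * b)"
proof (cases "b = 0")
  case True then show ?thesis by simp
next
  case False
  define b' where "b' = (1 / norm b) *\<^sub>R b"
  have "norm (star b' * b') = (norm b')^2" by (rule cstar_identity)
  also have "\<dots> = 1" using False by (simp add: b'_def)
  finally have "positive_element (star b' * b')" by (intro positive_element_star_mult_contraction) simp
  then have "positive_element ((norm b)^2 *\<^sub>R (star b' * b'))" by (intro positive_element_scaleR) auto
  moreover have "(norm b)^2 *\<^sub>R (star b' * b') = star b * b"
    using False by (simp add: b'_def star_scaleR power2_eq_square)
  ultimately show ?thesis by simp
qed

lemma positive_contraction_herm: "positive_contraction star a \<Longrightarrow> star a = a"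
  by (auto simp: positive_contraction_def star_mult star_star)

section \<open>Continuous functional calculus on \<open>[0, 1]\<close>\<close>

text \<open>A polynomial stand-in for \<open>star a = a \<and> \<sigma>(a) \<subseteq> [0, 1]\<close>.\<close>

definition poly_sup_bounded :: "'a \<Rightarrow> bool" where
  "poly_sup_bounded a \<longleftrightarrow> star a = a \<and>
     (\<forall>q M. (\<forall>t\<in>{0..1}. cmod (poly q (complex_of_real t)) \<le> M) \<longrightarrow> norm (peval scC q a) \<le> M)"

lemma poly_sup_bounded_peval_norm_le:
  assumes "poly_sup_bounded a" and "\<And>t. t \<in> {0..1} \<Longrightarrow> cmod (poly q (complex_of_real t)) \<le> M"
  shows "norm (peval scC q a) \<le> M"
  using assms unfolding poly_sup_bounded_def by blast

lemma poly_sup_bounded_herm: "poly_sup_bounded a \<Longrightarrow> star a = a"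
  by (simp add: poly_sup_bounded_def)

lemma positive_contraction_poly_sup_bounded:
  assumes "positive_contraction star a"
  shows "poly_sup_bounded a"
proof -
  obtain b where a: "a = star b * b" and an: "norm a \<le> 1"
    using assms by (auto simp: positive_contraction_def)
  have "norm (peval scC q a) \<le> M" if "\<forall>t\<in>{0..1}. cmod (poly q (complex_of_real t)) \<le> M" for q M
    using that an by (intro positive_peval_norm_le) (auto simp: a positive_element_star_mult)
  then show ?thesis
    unfolding poly_sup_bounded_def using positive_contraction_herm[OF assms] by blast
qed

lemma poly_sup_bounded_peval_diff_eventually_le:
  assumes a: "poly_sup_bounded a"
    and P: "uniform_limit {0..1} (\<lambda>n t. poly (P n) (of_real t)) f sequentially"
    and Q: "uniform_limit {0..1} (\<lambda>n t. poly (Q n) (of_real t)) g sequentially"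
    and fg: "\<And>t. t \<in> {0..1} \<Longrightarrow> cmod (f t - g t) \<le> M"
    and e: "e > 0"
  shows "\<forall>\<^sub>F n in sequentially. norm (peval scC (P n) a - peval scC (Q n) a) \<le> M + e"
proof -
  have "e/2 > 0" using e by simp
  from uniform_limitD[OF P this] uniform_limitD[OF Q this]
  show ?thesis
  proof eventually_elim
    case (elim n)
    have "norm (peval scC (P n - Q n) a) \<le> M + e"
    proof (rule poly_sup_bounded_peval_norm_le[OF a])
      fix t :: real assume t: "t \<in> {0..1}"
      have "cmod (poly (P n) (of_real t) - poly (Q n) (of_real t))
          \<le> cmod (poly (P n) (of_real t) - f t) + cmod (f t - g t) + cmod (g t - poly (Q n) (of_real t))"
      proof -
        have e: "poly (P n) (of_real t) - poly (Q n) (of_real t) =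
            (poly (P n) (of_real t) - f t) + (f t - g t) + (g t - poly (Q n) (of_real t))" by simp
        show ?thesis unfolding e by (rule order.trans[OF norm_triangle_ineq add_right_mono[OF norm_triangle_ineq]])
      qed
      also have "\<dots> \<le> e/2 + M + e/2"
        using elim t fg[OF t] by (intro add_mono) (auto simp: dist_norm norm_minus_commute less_imp_le)
      finally show "cmod (poly (P n - Q n) (of_real t)) \<le> M + e" by simp
    qed
    then show ?case by (simp add: peval_diff)
  qed
qed

lemma poly_sup_bounded_peval_diff_tendsto_0:
  assumes a: "poly_sup_bounded a"
    and Q: "uniform_limit {0..1} (\<lambda>n t. poly (Q n) (of_real t)) f sequentially"
    and R: "uniform_limit {0..1} (\<lambda>n t. poly (R n) (of_real t)) f sequentially"
  shows "(\<lambda>n. peval scC (Q n) a - peval scC (R n) a) \<longlonglongrightarrow> 0"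
  unfolding tendsto_iff
proof (intro allI impI)
  fix e :: real assume e: "e > 0"
  have "\<forall>\<^sub>F n in sequentially. norm (peval scC (Q n) a - peval scC (R n) a) \<le> 0 + e/2"
    by (rule poly_sup_bounded_peval_diff_eventually_le[OF a Q R]) (use e in auto)
  then show "\<forall>\<^sub>F n in sequentially. dist (peval scC (Q n) a - peval scC (R n) a) 0 < e"
    by eventually_elim (use e in auto)
qed

lemma poly_sup_bounded_peval_Cauchy:
  assumes a: "poly_sup_bounded a"
    and P: "uniform_limit {0..1} (\<lambda>n t. poly (P n) (of_real t)) f sequentially"
  shows "Cauchy (\<lambda>n. peval scC (P n) a)"
proof (rule CauchyI)
  fix e :: real assume e: "e > 0"
  then have "e/3 > 0" by simp
  from uniform_limitD[OF P this] obtain N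
    where N: "\<And>n t. n \<ge> N \<Longrightarrow> t \<in> {0..1} \<Longrightarrow> dist (poly (P n) (of_real t)) (f t) < e/3"
    unfolding eventually_sequentially by blast
  show "\<exists>M. \<forall>m\<ge>M. \<forall>n\<ge>M. norm (peval scC (P m) a - peval scC (P n) a) < e"
  proof (intro exI allI impI)
    fix m n assume m: "m \<ge> N" and n: "n \<ge> N"
    have "norm (peval scC (P m - P n) a) \<le> 2 * e / 3"
    proof (rule poly_sup_bounded_peval_norm_le[OF a])
      fix t :: real assume t: "t \<in> {0..1}"
      have "cmod (poly (P m) (of_real t) - poly (P n) (of_real t))
          \<le> dist (poly (P m) (of_real t)) (f t) + dist (poly (P n) (of_real t)) (f t)"
      proof -
        have e: "poly (P m) (of_real t) - poly (P n) (of_real t) =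
            (poly (P m) (of_real t) - f t) - (poly (P n) (of_real t) - f t)" by simp
        show ?thesis unfolding e dist_norm by (rule norm_triangle_ineq4)
      qed
      also have "\<dots> \<le> e/3 + e/3" using N[OF m t] N[OF n t] by simp
      finally show "cmod (poly (P m - P n) (of_real t)) \<le> 2 * e / 3" by simp
    qed
    then show "norm (peval scC (P m) a - peval scC (P n) a) < e" using e by (simp add: peval_diff)
  qed
qed

text \<open>The definite description in \<open>cfc\<close> only has a meaning if all uniformly approximating polynomial
  sequences give the same limit; for \<open>poly_sup_bounded a\<close> they do.\<close>

lemma cfc_tendsto:
  assumes a: "poly_sup_bounded a"
    and P: "uniform_limit {0..1} (\<lambda>n t. poly (P n) (of_real t)) f sequentially"
  shows "(\<lambda>n. peval scC (P n) a) \<longlonglongrightarrow> cfc scC f a"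
proof -
  obtain y where y: "(\<lambda>n. peval scC (P n) a) \<longlonglongrightarrow> y"
  proof -
    have "convergent (\<lambda>n. peval scC (P n) a)"
      using poly_sup_bounded_peval_Cauchy[OF a P] by (simp add: Cauchy_convergent_iff)
    then show ?thesis unfolding convergent_def using that by blast
  qed
  have all: "(\<lambda>n. peval scC (Q n) a) \<longlonglongrightarrow> y"
    if Q: "uniform_limit {0..1} (\<lambda>n t. poly (Q n) (of_real t)) f sequentially" for Q
  proof -
    have "(\<lambda>n. (peval scC (Q n) a - peval scC (P n) a) + peval scC (P n) a) \<longlonglongrightarrow> 0 + y"
      by (intro tendsto_add poly_sup_bounded_peval_diff_tendsto_0[OF a Q P] y)
    then show ?thesis by simp
  qed
  have cy: "cfc scC f a = y"
    unfolding cfc_def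
  proof (rule the_equality)
    show "\<forall>Q. uniform_limit {0..1} (\<lambda>n t. poly (Q n) (of_real t)) f sequentially \<longrightarrow>
        (\<lambda>n. peval scC (Q n) a) \<longlonglongrightarrow> y" by (intro allI impI all)
    fix y' assume H: "\<forall>Q. uniform_limit {0..1} (\<lambda>n t. poly (Q n) (of_real t)) f sequentially \<longrightarrow>
        (\<lambda>n. peval scC (Q n) a) \<longlonglongrightarrow> y'"
    have "(\<lambda>n. peval scC (P n) a) \<longlonglongrightarrow> y'" by (rule H[rule_format, OF P])
    then show "y' = y" using y by (rule LIMSEQ_unique)
  qed
  show ?thesis unfolding cy by (rule y)
qed

lemma cfc_poly: "poly_sup_bounded a \<Longrightarrow> cfc scC (\<lambda>t. poly p (of_real t)) a = peval scC p a"
  using cfc_tendsto[of a "\<lambda>n. p" "\<lambda>t. poly p (of_real t)"]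
  by (simp add: uniform_limit_const LIMSEQ_const_iff)

lemma cfc_const: "poly_sup_bounded a \<Longrightarrow> cfc scC (\<lambda>t. c) a = scC c 1"
  using cfc_poly[of a "[:c:]"] by simp

lemma cfc_cong:
  assumes "\<And>t. t \<in> {0..1} \<Longrightarrow> f t = g t"
  shows "cfc scC f a = cfc scC g a"
proof -
  have "uniform_limit {0..1} (\<lambda>n t. poly (P n) (of_real t)) f sequentially \<longleftrightarrow>
        uniform_limit {0..1} (\<lambda>n t. poly (P n) (of_real t)) g sequentially" for P :: "nat \<Rightarrow> complex poly"
    by (rule uniform_limit_cong') (use assms in auto)
  then show ?thesis unfolding cfc_def by simp
qed

lemma cfc_norm_le:
  assumes a: "poly_sup_bounded a" and f: "continuous_on {0..1} f" and g: "continuous_on {0..1} g"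
    and fg: "\<And>t. t \<in> {0..1} \<Longrightarrow> cmod (f t - g t) \<le> M"
  shows "norm (cfc scC f a - cfc scC g a) \<le> M"
proof -
  obtain P where P: "uniform_limit {0..1} (\<lambda>n t. poly (P n) (of_real t)) f sequentially"
    using uniform_limit_poly_exists[OF f] by blast
  obtain Q where Q: "uniform_limit {0..1} (\<lambda>n t. poly (Q n) (of_real t)) g sequentially"
    using uniform_limit_poly_exists[OF g] by blast
  have lim: "(\<lambda>n. norm (peval scC (P n) a - peval scC (Q n) a)) \<longlonglongrightarrow> norm (cfc scC f a - cfc scC g a)"
    by (intro tendsto_intros cfc_tendsto[OF a P] cfc_tendsto[OF a Q])
  show ?thesis
  proof (rule field_le_epsilon)
    fix e :: real assume e: "e > 0"
    have ev: "\<forall>\<^sub>F n in sequentially. norm (peval scC (P n) a - peval scC (Q n) a) \<le> M + e"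
      by (rule poly_sup_bounded_peval_diff_eventually_le[OF a P Q]) (use fg e in auto)
    show "norm (cfc scC f a - cfc scC g a) \<le> M + e"
      by (rule tendsto_upperbound[OF lim ev]) simp
  qed
qed

lemma cfc_add:
  assumes a: "poly_sup_bounded a" and f: "continuous_on {0..1} f" and g: "continuous_on {0..1} g"
  shows "cfc scC (\<lambda>t. f t + g t) a = cfc scC f a + cfc scC g a"
proof -
  obtain P where P: "uniform_limit {0..1} (\<lambda>n t. poly (P n) (of_real t)) f sequentially"
    using uniform_limit_poly_exists[OF f] by blast
  obtain Q where Q: "uniform_limit {0..1} (\<lambda>n t. poly (Q n) (of_real t)) g sequentially"
    using uniform_limit_poly_exists[OF g] by blast
  have PQ: "uniform_limit {0..1} (\<lambda>n t. poly (P n + Q n) (of_real t)) (\<lambda>t. f t + g t) sequentially"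
    using uniform_limit_add[OF P Q] by simp
  have "(\<lambda>n. peval scC (P n + Q n) a) \<longlonglongrightarrow> cfc scC (\<lambda>t. f t + g t) a" by (rule cfc_tendsto[OF a PQ])
  moreover have "(\<lambda>n. peval scC (P n + Q n) a) \<longlonglongrightarrow> cfc scC f a + cfc scC g a"
    unfolding peval_add by (intro tendsto_add cfc_tendsto[OF a P] cfc_tendsto[OF a Q])
  ultimately show ?thesis by (rule LIMSEQ_unique)
qed

lemma cfc_diff:
  assumes a: "poly_sup_bounded a" and f: "continuous_on {0..1} f" and g: "continuous_on {0..1} g"
  shows "cfc scC (\<lambda>t. f t - g t) a = cfc scC f a - cfc scC g a"
proof -
  have "cfc scC (\<lambda>t. (f t - g t) + g t) a = cfc scC (\<lambda>t. f t - g t) a + cfc scC g a"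
    by (rule cfc_add[OF a _ g]) (auto intro: continuous_intros f g)
  then show ?thesis by simp
qed

lemma cfc_mult:
  assumes a: "poly_sup_bounded a" and f: "continuous_on {0..1} f" and g: "continuous_on {0..1} g"
  shows "cfc scC (\<lambda>t. f t * g t) a = cfc scC f a * cfc scC g a"
proof -
  obtain P where P: "uniform_limit {0..1} (\<lambda>n t. poly (P n) (of_real t)) f sequentially"
    using uniform_limit_poly_exists[OF f] by blast
  obtain Q where Q: "uniform_limit {0..1} (\<lambda>n t. poly (Q n) (of_real t)) g sequentially"
    using uniform_limit_poly_exists[OF g] by blast
  have PQ: "uniform_limit {0..1} (\<lambda>n t. poly (P n * Q n) (of_real t)) (\<lambda>t. f t * g t) sequentially"
    using uniform_lim_mult[OF P Q compact_imp_bounded[OF compact_continuous_image[OF f compact_Icc]]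
        compact_imp_bounded[OF compact_continuous_image[OF g compact_Icc]]] by simp
  have "(\<lambda>n. peval scC (P n * Q n) a) \<longlonglongrightarrow> cfc scC (\<lambda>t. f t * g t) a" by (rule cfc_tendsto[OF a PQ])
  moreover have "(\<lambda>n. peval scC (P n * Q n) a) \<longlonglongrightarrow> cfc scC f a * cfc scC g a"
    unfolding peval_mult by (intro tendsto_mult cfc_tendsto[OF a P] cfc_tendsto[OF a Q])
  ultimately show ?thesis by (rule LIMSEQ_unique)
qed

lemma cfc_cnj:
  assumes a: "poly_sup_bounded a" and f: "continuous_on {0..1} f"
  shows "cfc scC (\<lambda>t. cnj (f t)) a = star (cfc scC f a)"
proof -
  obtain P where P: "uniform_limit {0..1} (\<lambda>n t. poly (P n) (of_real t)) f sequentially"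
    using uniform_limit_poly_exists[OF f] by blast
  have P': "uniform_limit {0..1} (\<lambda>n t. poly (map_poly cnj (P n)) (of_real t)) (\<lambda>t. cnj (f t)) sequentially"
  proof -
    have "uniform_limit {0..1} (\<lambda>n t. cnj (poly (P n) (of_real t))) (\<lambda>t. cnj (f t)) sequentially"
      by (rule bounded_linear.uniform_limit[OF bounded_linear_cnj P])
    moreover have ce: "cnj (poly (P n) (of_real t)) = poly (map_poly cnj (P n)) (of_real t)" for n t
      by (simp only: poly_cnj complex_cnj_complex_of_real)
    ultimately show ?thesis by (simp only: ce)
  qed
  have "(\<lambda>n. peval scC (map_poly cnj (P n)) a) \<longlonglongrightarrow> cfc scC (\<lambda>t. cnj (f t)) a" by (rule cfc_tendsto[OF a P'])
  moreover have "(\<lambda>n. peval scC (map_poly cnj (P n)) a) \<longlonglongrightarrow> star (cfc scC f a)"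
  proof -
    have "(\<lambda>n. star (peval scC (P n) a)) \<longlonglongrightarrow> star (cfc scC f a)" by (intro tendsto_star cfc_tendsto[OF a P])
    then show ?thesis by (simp add: star_peval poly_sup_bounded_herm[OF a])
  qed
  ultimately show ?thesis by (rule LIMSEQ_unique)
qed

lemma cfc_real_herm:
  assumes a: "poly_sup_bounded a" and g: "continuous_on {0..1} g"
  shows "star (cfc scC (\<lambda>t. complex_of_real (g t)) a) = cfc scC (\<lambda>t. complex_of_real (g t)) a"
  using cfc_cnj[OF a, of "\<lambda>t. complex_of_real (g t)"] g by (auto intro: continuous_intros)

lemma cfc_zero: "poly_sup_bounded a \<Longrightarrow> cfc scC (\<lambda>t. 0) a = 0"
  using cfc_const[of a 0] by simp

lemma peval_cfc:
  assumes a: "poly_sup_bounded a" and h: "continuous_on {0..1} h"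
  shows "peval scC q (cfc scC h a) = cfc scC (\<lambda>t. poly q (h t)) a"
proof (induction q rule: pCons_induct)
  case 0
  then show ?case using cfc_zero[OF a] by simp
next
  case (pCons c q)
  have cq: "continuous_on {0..1} (\<lambda>t. poly q (h t))"
    by (rule continuous_on_compose2[OF _ h, of UNIV]) (auto intro: continuous_intros)
  have "cfc scC (\<lambda>t. poly (pCons c q) (h t)) a = cfc scC (\<lambda>t. c + h t * poly q (h t)) a" by simp
  also have "\<dots> = cfc scC (\<lambda>t. c) a + cfc scC (\<lambda>t. h t * poly q (h t)) a"
    by (rule cfc_add[OF a]) (auto intro: continuous_intros h cq)
  also have "\<dots> = scC c 1 + cfc scC h a * cfc scC (\<lambda>t. poly q (h t)) a"
    by (simp add: cfc_const[OF a] cfc_mult[OF a h cq])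
  finally show ?case by (simp add: peval_pCons pCons.IH)
qed

lemma poly_sup_bounded_cfc:
  fixes g :: "real \<Rightarrow> real"
  assumes a: "poly_sup_bounded a" and g: "continuous_on {0..1} g" and g01: "\<And>t. t \<in> {0..1} \<Longrightarrow> g t \<in> {0..1}"
  shows "poly_sup_bounded (cfc scC (\<lambda>t. complex_of_real (g t)) a)"
  unfolding poly_sup_bounded_def
proof (intro conjI allI impI)
  show "star (cfc scC (\<lambda>t. complex_of_real (g t)) a) = cfc scC (\<lambda>t. complex_of_real (g t)) a"
    by (rule cfc_real_herm[OF a g])
  fix q M assume qM: "\<forall>t\<in>{0..1}. cmod (poly q (complex_of_real t)) \<le> M"
  have gc: "continuous_on {0..1} (\<lambda>t. complex_of_real (g t))" using g by (auto intro: continuous_intros)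
  have cq: "continuous_on {0..1} (\<lambda>t. poly q (complex_of_real (g t)))"
    by (rule continuous_on_compose2[OF _ gc, of UNIV]) (auto intro: continuous_intros)
  have e1: "peval scC q (cfc scC (\<lambda>t. complex_of_real (g t)) a) = cfc scC (\<lambda>t. poly q (complex_of_real (g t))) a"
    by (rule peval_cfc[OF a gc])
  have "norm (cfc scC (\<lambda>t. poly q (complex_of_real (g t))) a - cfc scC (\<lambda>t. 0) a) \<le> M"
    by (rule cfc_norm_le[OF a cq continuous_on_const]) (use qM g01 in auto)
  then show "norm (peval scC q (cfc scC (\<lambda>t. complex_of_real (g t)) a)) \<le> M"
    by (simp add: e1 cfc_zero[OF a])
qed

lemma cfc_compose:
  fixes g :: "real \<Rightarrow> real"
  assumes a: "poly_sup_bounded a" and g: "continuous_on {0..1} g" and g01: "\<And>t. t \<in> {0..1} \<Longrightarrow> g t \<in> {0..1}"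
    and F: "continuous_on {0..1} F"
  shows "cfc scC F (cfc scC (\<lambda>t. complex_of_real (g t)) a) = cfc scC (\<lambda>t. F (g t)) a"
proof -
  define b where "b = cfc scC (\<lambda>t. complex_of_real (g t)) a"
  have bPC: "poly_sup_bounded b" unfolding b_def by (rule poly_sup_bounded_cfc[OF a g g01])
  have gc: "continuous_on {0..1} (\<lambda>t. complex_of_real (g t))" using g by (auto intro: continuous_intros)
  have Fg: "continuous_on {0..1} (\<lambda>t. F (g t))"
    by (rule continuous_on_compose2[OF F g]) (use g01 in auto)
  obtain P where P: "uniform_limit {0..1} (\<lambda>n t. poly (P n) (of_real t)) F sequentially"
    using uniform_limit_poly_exists[OF F] by blast
  have 1: "(\<lambda>n. peval scC (P n) b) \<longlonglongrightarrow> cfc scC F b" by (rule cfc_tendsto[OF bPC P])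
  have e: "peval scC (P n) b = cfc scC (\<lambda>t. poly (P n) (of_real (g t))) a" for n
    unfolding b_def by (rule peval_cfc[OF a gc])
  have 2: "(\<lambda>n. peval scC (P n) b) \<longlonglongrightarrow> cfc scC (\<lambda>t. F (g t)) a"
    unfolding tendsto_iff e
  proof (intro allI impI)
    fix r :: real assume r: "r > 0"
    then have "r/2 > 0" by simp
    from uniform_limitD[OF P this]
    show "\<forall>\<^sub>F n in sequentially. dist (cfc scC (\<lambda>t. poly (P n) (of_real (g t))) a) (cfc scC (\<lambda>t. F (g t)) a) < r"
    proof eventually_elim
      case (elim n)
      have cq: "continuous_on {0..1} (\<lambda>t. poly (P n) (complex_of_real (g t)))"
        by (rule continuous_on_compose2[OF _ gc, of UNIV]) (auto intro: continuous_intros)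
      have "norm (cfc scC (\<lambda>t. poly (P n) (of_real (g t))) a - cfc scC (\<lambda>t. F (g t)) a) \<le> r/2"
        by (rule cfc_norm_le[OF a cq Fg]) (use elim g01 in \<open>auto simp: dist_norm less_imp_le\<close>)
      then show ?case using r by (simp add: dist_norm)
    qed
  qed
  from 1 2 show ?thesis unfolding b_def by (rule LIMSEQ_unique)
qed

section \<open>Tracial states and the 2-norm\<close>

context
  fixes \<tau> :: "'a \<Rightarrow> complex"
  assumes tr: "tracial_state star scC \<tau>"
begin

lemma tr_add: "\<tau> (x + y) = \<tau> x + \<tau> y"
  using tr unfolding tracial_state_def by blast

lemma tr_scC: "\<tau> (scC c x) = c * \<tau> x"
  using tr unfolding tracial_state_def by blast

lemma tr_one: "\<tau> 1 = 1"
  using tr unfolding tracial_state_def by blast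

lemma tr_comm: "\<tau> (x * y) = \<tau> (y * x)"
  using tr unfolding tracial_state_def by blast

lemma tr_pos: "Re (\<tau> (star x * x)) \<ge> 0"
  using tr unfolding tracial_state_def by blast

lemma tr_pos_im: "Im (\<tau> (star x * x)) = 0"
  using tr unfolding tracial_state_def by blast

lemma tr_zero: "\<tau> 0 = 0"
  using tr_scC[of 0 0] by simp

lemma tr_diff: "\<tau> (x - y) = \<tau> x - \<tau> y"
  using tr_add[of "x - y" y] by simp

lemma tr_scaleR: "\<tau> (r *\<^sub>R x) = of_real r * \<tau> x"
  using tr_scC[of "of_real r" x] by (simp add: scC_of_real)

lemma tr_herm_Im_eq_0:
  assumes "star h = h"
  shows "Im (\<tau> h) = 0"
proof -
  have "star (h + 1) * (h + 1) = star h * h + 2 *\<^sub>R h + 1"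
    using assms by (simp add: star_add algebra_simps scaleR_2)
  then have "\<tau> (star (h + 1) * (h + 1)) = \<tau> (star h * h) + 2 * \<tau> h + 1"
    by (simp add: tr_add tr_scaleR tr_one)
  then have "Im (\<tau> (star (h + 1) * (h + 1))) = Im (\<tau> (star h * h)) + 2 * Im (\<tau> h)" by simp
  then show ?thesis using tr_pos_im[of "h + 1"] tr_pos_im[of h] by simp
qed

lemma tr_star: "\<tau> (star w) = cnj (\<tau> w)"
proof -
  have "star (w + star w) = w + star w"
    by (simp add: star_add star_star add.commute)
  from tr_herm_Im_eq_0[OF this] have re: "Im (\<tau> w) + Im (\<tau> (star w)) = 0"
    by (simp add: tr_add)
  have "star (iunit * (w - star w)) = (star w - w) * (- iunit)"
    by (simp add: star_mult star_diff star_star star_iunit)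
  also have "\<dots> = iunit * (w - star w)"
    by (simp add: iunit_commute algebra_simps)
  finally have "Im (\<tau> (iunit * (w - star w))) = 0"
    by (rule tr_herm_Im_eq_0)
  then have "Im (\<i> * (\<tau> w - \<tau> (star w))) = 0"
    by (simp add: iunit_def scC_one_mult tr_scC tr_diff)
  with re show ?thesis
    by (simp add: complex_eq_iff)
qed

lemma tr_Re_sandwich_le:
  assumes ch: "star c = c"
  shows "Re (\<tau> (star y * c * y)) \<le> norm c * Re (\<tau> (star y * y))"
proof (cases "c = 0")
  case True then show ?thesis by (simp add: tr_zero)
next
  case False
  define K where "K = norm c"
  have K: "K > 0" using False by (simp add: K_def)
  define z where "z = (1 / K) *\<^sub>R c"
  have zh: "star z = z" by (simp add: z_def star_scaleR ch)
  have zn: "norm z \<le> 1" using K by (simp add: z_def K_def)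
  define s where "s = sqrt_one_minus z"
  have sh: "star s = s" by (simp add: s_def herm_sqrt_one_minus[OF zh zn])
  have ss: "s * s = 1 - z" by (simp add: s_def sqrt_one_minus_square[OF zn])
  have "star (s * y) * (s * y) = star y * (s * s) * y" by (simp add: star_mult sh mult.assoc)
  also have "\<dots> = star y * y - (1 / K) *\<^sub>R (star y * c * y)" by (simp add: ss z_def algebra_simps)
  finally have e: "star (s * y) * (s * y) = star y * y - (1 / K) *\<^sub>R (star y * c * y)" .
  have "0 \<le> Re (\<tau> (star (s * y) * (s * y)))" by (rule tr_pos)
  then have "(1 / K) * Re (\<tau> (star y * c * y)) \<le> Re (\<tau> (star y * y))"
    by (simp add: e tr_diff tr_scaleR)
  then show ?thesis using K by (simp add: K_def field_simps)
qed

lemma tr_herm_Re_le_norm: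
  assumes "star z = z"
  shows "Re (\<tau> z) \<le> norm z"
  using tr_Re_sandwich_le[OF assms, of 1] by (simp add: tr_one)

lemma norm2_sq: "(norm2 star \<tau> x)^2 = Re (\<tau> (star x * x))"
  unfolding norm2_def using tr_pos[of x] by simp

lemma norm2_nonneg: "norm2 star \<tau> x \<ge> 0"
  unfolding norm2_def using tr_pos[of x] by simp

lemma norm2_le_norm: "norm2 star \<tau> x \<le> norm x"
proof -
  have "Re (\<tau> (star x * x)) \<le> norm (star x * x)"
    by (rule tr_herm_Re_le_norm) (simp add: star_mult star_star)
  then have "(norm2 star \<tau> x)^2 \<le> (norm x)^2" by (simp add: norm2_sq cstar_identity)
  then show ?thesis using norm2_nonneg[of x] by (simp add: power2_le_iff_abs_le)
qed

lemma norm2_mult_left: "norm2 star \<tau> (x * y) \<le> norm x * norm2 star \<tau> y"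
proof -
  have "Re (\<tau> (star (x * y) * (x * y))) = Re (\<tau> (star y * (star x * x) * y))"
    by (simp add: star_mult mult.assoc)
  also have "\<dots> \<le> norm (star x * x) * Re (\<tau> (star y * y))"
    by (rule tr_Re_sandwich_le) (simp add: star_mult star_star)
  finally have "(norm2 star \<tau> (x * y))^2 \<le> (norm x * norm2 star \<tau> y)^2"
    by (simp add: norm2_sq cstar_identity power_mult_distrib)
  then show ?thesis using norm2_nonneg[of "x * y"] norm2_nonneg[of y]
    by (simp add: power2_le_iff_abs_le)
qed

lemma norm2_star: "norm2 star \<tau> (star x) = norm2 star \<tau> x"
  unfolding norm2_def by (simp add: star_star tr_comm[of x "star x"])

lemma norm2_mult_right: "norm2 star \<tau> (x * y) \<le> norm2 star \<tau> x * norm y"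
proof -
  have "norm2 star \<tau> (x * y) = norm2 star \<tau> (star y * star x)"
    by (simp add: norm2_star[of "x * y", symmetric] star_mult)
  also have "\<dots> \<le> norm (star y) * norm2 star \<tau> (star x)" by (rule norm2_mult_left)
  finally show ?thesis by (simp add: norm2_star mult.commute)
qed

lemma tr_Re_Cauchy_Schwarz: "Re (\<tau> (star y * x)) \<le> norm2 star \<tau> x * norm2 star \<tau> y"
proof -
  define A where "A = Re (\<tau> (star x * x))"
  define B where "B = Re (\<tau> (star y * x))"
  define C where "C = Re (\<tau> (star y * y))"
  have B': "Re (\<tau> (star x * y)) = B"
  proof -
    have "\<tau> (star x * y) = \<tau> (star (star y * x))" by (simp add: star_mult star_star)
    then show ?thesis by (simp add: tr_star B_def)
  qed
  have "B \<le> sqrt A * sqrt C"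
  proof (rule Cauchy_Schwarz_of_quadratic_nonneg)
    fix l :: real
    have "star (x - l *\<^sub>R y) * (x - l *\<^sub>R y)
        = star x * x - l *\<^sub>R (star x * y) - l *\<^sub>R (star y * x) + (l^2) *\<^sub>R (star y * y)"
      by (simp add: star_diff star_scaleR algebra_simps power2_eq_square)
    then have "Re (\<tau> (star (x - l *\<^sub>R y) * (x - l *\<^sub>R y))) = A - 2 * l * B + l^2 * C"
      by (simp add: tr_add tr_diff tr_scaleR A_def C_def B' B_def)
    then show "0 \<le> A - 2 * l * B + l^2 * C" using tr_pos by metis
  qed (use tr_pos A_def C_def in auto)
  then show ?thesis by (simp add: B_def A_def C_def norm2_def)
qed

lemma norm2_triangle: "norm2 star \<tau> (x + y) \<le> norm2 star \<tau> x + norm2 star \<tau> y"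
proof -
  have B: "Re (\<tau> (star y * x)) \<le> norm2 star \<tau> x * norm2 star \<tau> y"
    by (rule tr_Re_Cauchy_Schwarz)
  have B': "Re (\<tau> (star x * y)) \<le> norm2 star \<tau> x * norm2 star \<tau> y"
    using tr_Re_Cauchy_Schwarz[of x y] by (simp add: mult.commute)
  have "(norm2 star \<tau> (x + y))^2
      = Re (\<tau> (star x * x)) + Re (\<tau> (star y * y)) + Re (\<tau> (star y * x)) + Re (\<tau> (star x * y))"
    by (simp add: norm2_sq star_add algebra_simps tr_add)
  also have "\<dots> \<le> (norm2 star \<tau> x)^2 + (norm2 star \<tau> y)^2 + 2 * (norm2 star \<tau> x * norm2 star \<tau> y)"
    using B B' by (simp add: norm2_sq)
  also have "\<dots> = (norm2 star \<tau> x + norm2 star \<tau> y)^2" by (simp add: power2_eq_square algebra_simps)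
  finally show ?thesis using norm2_nonneg[of "x+y"] norm2_nonneg[of x] norm2_nonneg[of y]
    by (simp add: power2_le_iff_abs_le)
qed

lemma norm2_minus: "norm2 star \<tau> (- x) = norm2 star \<tau> x"
  unfolding norm2_def by (simp add: star_minus)

lemma norm2_diff: "norm2 star \<tau> (x - y) \<le> norm2 star \<tau> x + norm2 star \<tau> y"
  using norm2_triangle[of x "- y"] by (simp add: norm2_minus)

lemma norm2_scC: "norm2 star \<tau> (scC c x) = cmod c * norm2 star \<tau> x"
proof -
  have "star (scC c x) * scC c x = scC (cnj c * c) (star x * x)"
    by (simp add: star_scC scC_mult_left scC_mult_right scC_assoc mult.commute)
  also have "cnj c * c = of_real ((cmod c)^2)" by (simp only: complex_norm_square mult.commute)
  finally have "Re (\<tau> (star (scC c x) * scC c x)) = (cmod c)^2 * Re (\<tau> (star x * x))"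
    by (simp add: tr_scC)
  then show ?thesis unfolding norm2_def by (simp add: real_sqrt_mult)
qed

lemma norm2_one: "norm2 star \<tau> 1 = 1"
  unfolding norm2_def by (simp add: tr_one)

lemma tr_Re_le_norm2: "Re (\<tau> x) \<le> norm2 star \<tau> x"
  using tr_Re_Cauchy_Schwarz[of 1 x] by (simp add: norm2_one)

lemma norm2_zero: "norm2 star \<tau> 0 = 0"
  by (simp add: norm2_def tr_zero)

lemma norm2_sum: "norm2 star \<tau> (sum f A) \<le> (\<Sum>i\<in>A. norm2 star \<tau> (f i))"
proof (induction A rule: infinite_finite_induct)
  case (insert i A)
  then show ?case
    using norm2_triangle[of "f i" "sum f A"] by simp
qed (simp_all add: norm2_zero)

lemma norm2_power_diff_le:
  assumes an: "norm a \<le> 1" and bn: "norm b \<le> 1"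
  shows "norm2 star \<tau> (a ^ i - b ^ i) \<le> real i * norm2 star \<tau> (a - b)"
proof (induction i)
  case 0 then show ?case by (simp add: norm2_zero)
next
  case (Suc i)
  have e: "a ^ Suc i - b ^ Suc i = a * (a ^ i - b ^ i) + (a - b) * b ^ i"
    by (simp add: algebra_simps)
  have "norm2 star \<tau> (a ^ Suc i - b ^ Suc i)
      \<le> norm2 star \<tau> (a * (a ^ i - b ^ i)) + norm2 star \<tau> ((a - b) * b ^ i)"
    unfolding e by (rule norm2_triangle)
  also have "\<dots> \<le> norm a * norm2 star \<tau> (a ^ i - b ^ i) + norm2 star \<tau> (a - b) * norm (b ^ i)"
    by (intro add_mono norm2_mult_left norm2_mult_right)
  also have "\<dots> \<le> 1 * (real i * norm2 star \<tau> (a - b)) + norm2 star \<tau> (a - b) * 1"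
    by (intro add_mono mult_mono Suc.IH an norm_power_le_one bn mult_left_mono norm2_nonneg) auto
  finally show ?case by (simp add: algebra_simps)
qed

lemma norm2_peval_diff_le:
  assumes an: "norm a \<le> 1" and bn: "norm b \<le> 1"
  shows "norm2 star \<tau> (peval scC p a - peval scC p b)
     \<le> (\<Sum>i\<le>degree p. cmod (coeff p i) * real i) * norm2 star \<tau> (a - b)"
proof -
  have "peval scC p a - peval scC p b = (\<Sum>i\<le>degree p. scC (coeff p i) (a ^ i - b ^ i))"
    by (simp add: peval_def sum_subtractf scC_diff_right)
  then have "norm2 star \<tau> (peval scC p a - peval scC p b)
      \<le> (\<Sum>i\<le>degree p. norm2 star \<tau> (scC (coeff p i) (a ^ i - b ^ i)))"
    by (simp add: norm2_sum)
  also have "\<dots> \<le> (\<Sum>i\<le>degree p. cmod (coeff p i) * (real i * norm2 star \<tau> (a - b)))"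
    by (intro sum_mono) (simp add: norm2_scC mult_left_mono norm2_power_diff_le[OF an bn])
  also have "\<dots> = (\<Sum>i\<le>degree p. cmod (coeff p i) * real i) * norm2 star \<tau> (a - b)"
    by (simp add: sum_distrib_right mult.assoc)
  finally show ?thesis .
qed

end

lemma positive_contraction_norm_le: "positive_contraction star a \<Longrightarrow> norm a \<le> 1"
  by (simp add: positive_contraction_def)

lemma norm_cfc_minus_peval_le:
  assumes a: "poly_sup_bounded a" and f: "continuous_on {0..1} f"
    and p: "\<And>t. t \<in> {0..1} \<Longrightarrow> cmod (f t - poly p (of_real t)) \<le> e"
  shows "norm (cfc scC f a - peval scC p a) \<le> e"
proof -
  have "norm (cfc scC f a - cfc scC (\<lambda>t. poly p (complex_of_real t)) a) \<le> e"
    using p by (intro cfc_norm_le[OF a f]) (auto intro: continuous_intros)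
  then show ?thesis by (simp add: cfc_poly[OF a])
qed

context
  fixes \<tau> :: "'a \<Rightarrow> complex"
  assumes tr: "tracial_state star scC \<tau>"
begin

lemma norm2_cfc_minus_peval_le:
  assumes x: "positive_contraction star x" and f: "continuous_on {0..1} f"
    and p: "\<And>t. t \<in> {0..1} \<Longrightarrow> cmod (f t - poly p (of_real t)) \<le> e"
  shows "norm2 star \<tau> (cfc scC f x - peval scC p x) \<le> e"
  using norm_cfc_minus_peval_le[OF positive_contraction_poly_sup_bounded[OF x] f p]
    norm2_le_norm[OF tr] order.trans by blast

lemma tr_Re_less_of_norm2_diff_less:
  assumes "norm2 star \<tau> (x - y) < e"
  shows "Re (\<tau> x) < Re (\<tau> y) + e"
  using tr_Re_le_norm2[OF tr, of "x - y"] assms by (simp add: tr_diff[OF tr])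

lemma tr_cfc_nonneg:
  fixes F :: "real \<Rightarrow> real"
  assumes a: "poly_sup_bounded a" and F: "continuous_on {0..1} F"
    and F0: "\<And>t. t \<in> {0..1} \<Longrightarrow> F t \<ge> 0"
  shows "Re (\<tau> (cfc scC (\<lambda>t. complex_of_real (F t)) a)) \<ge> 0"
proof -
  define G where "G t = complex_of_real (sqrt (F t))" for t
  have G: "continuous_on {0..1} (\<lambda>t. sqrt (F t))" and Gc: "continuous_on {0..1} G"
    unfolding G_def by (auto intro: continuous_intros F)
  have "cfc scC (\<lambda>t. complex_of_real (F t)) a = cfc scC (\<lambda>t. G t * G t) a"
    by (rule cfc_cong) (use F0 in \<open>simp add: G_def flip: of_real_mult\<close>)
  also have "\<dots> = cfc scC G a * cfc scC G a"
    by (rule cfc_mult[OF a Gc Gc])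
  also have "\<dots> = star (cfc scC G a) * cfc scC G a"
    using cfc_real_herm[OF a G] by (simp add: G_def[abs_def])
  finally show ?thesis by (simp add: tr_pos[OF tr])
qed

lemma tr_cfc_mono:
  fixes F F' :: "real \<Rightarrow> real"
  assumes a: "poly_sup_bounded a" and F: "continuous_on {0..1} F"
    and F': "continuous_on {0..1} F'" and le: "\<And>t. t \<in> {0..1} \<Longrightarrow> F t \<le> F' t"
  shows "Re (\<tau> (cfc scC (\<lambda>t. complex_of_real (F t)) a))
    \<le> Re (\<tau> (cfc scC (\<lambda>t. complex_of_real (F' t)) a))"
proof -
  have "Re (\<tau> (cfc scC (\<lambda>t. complex_of_real (F' t - F t)) a)) \<ge> 0"
    by (rule tr_cfc_nonneg[OF a]) (use le in \<open>auto intro: continuous_intros F F'\<close>)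
  moreover have "cfc scC (\<lambda>t. complex_of_real (F' t - F t)) a =
      cfc scC (\<lambda>t. complex_of_real (F' t)) a - cfc scC (\<lambda>t. complex_of_real (F t)) a"
    unfolding of_real_diff by (rule cfc_diff[OF a]) (auto intro: continuous_intros F F')
  ultimately show ?thesis by (simp add: tr_diff[OF tr])
qed

lemma tr_cfc_const:
  assumes "poly_sup_bounded a"
  shows "\<tau> (cfc scC (\<lambda>t. c) a) = c"
  by (simp add: cfc_const[OF assms] tr_scC[OF tr] tr_one[OF tr])

lemma tr_cfc_root_tendsto_dim_fun:
  assumes x: "poly_sup_bounded x"
  shows "(\<lambda>n. Re (\<tau> (cfc scC (\<lambda>t. complex_of_real (root n t)) x))) \<longlonglongrightarrow> dim_fun scC \<tau> x"
    and "\<And>n. Re (\<tau> (cfc scC (\<lambda>t. complex_of_real (root n t)) x)) \<le> dim_fun scC \<tau> x"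
proof -
  define s where "s n = Re (\<tau> (cfc scC (\<lambda>t. complex_of_real (root n t)) x))" for n
  have rc: "continuous_on {0..1} (root n)" for n
    by (auto intro: continuous_intros)
  have "incseq s"
    unfolding s_def
    by (rule incseq_SucI, rule tr_cfc_mono[OF x rc rc]) (auto intro: root_le_root_Suc)
  moreover have "s n \<le> 1" for n
    using tr_cfc_mono[OF x rc continuous_on_const, of n 1]
    by (simp add: s_def tr_cfc_const[OF x] root_le_one)
  ultimately obtain L where L: "s \<longlonglongrightarrow> L" "\<forall>i. s i \<le> L"
    using incseq_convergent[of s 1] by blast
  moreover have "dim_fun scC \<tau> x = L"
    unfolding dim_fun_def using L(1) by (simp add: s_def[abs_def] limI)
  ultimately show "s \<longlonglongrightarrow> dim_fun scC \<tau> x" "\<And>n. s n \<le> dim_fun scC \<tau> x"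
    by auto
qed

lemma dim_fun_cfc_le_tr_cfc:
  fixes h g :: "real \<Rightarrow> real"
  assumes a: "poly_sup_bounded a" and h: "continuous_on {0..1} h"
    and h01: "\<And>t. t \<in> {0..1} \<Longrightarrow> h t \<in> {0..1}" and g: "continuous_on {0..1} g"
    and le: "\<And>m t. t \<in> {0..1} \<Longrightarrow> root m (h t) \<le> g t"
  shows "dim_fun scC \<tau> (cfc scC (\<lambda>t. complex_of_real (h t)) a)
    \<le> Re (\<tau> (cfc scC (\<lambda>t. complex_of_real (g t)) a))"
proof (rule tendsto_upperbound[OF tr_cfc_root_tendsto_dim_fun(1)[OF poly_sup_bounded_cfc[OF a h h01]]])
  have "Re (\<tau> (cfc scC (\<lambda>t. complex_of_real (root m t)) (cfc scC (\<lambda>t. complex_of_real (h t)) a)))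
      \<le> Re (\<tau> (cfc scC (\<lambda>t. complex_of_real (g t)) a))" for m
  proof -
    have "continuous_on {0..1} (\<lambda>t. root m (h t))"
      by (intro continuous_intros h)
    then have "Re (\<tau> (cfc scC (\<lambda>t. complex_of_real (root m (h t))) a))
        \<le> Re (\<tau> (cfc scC (\<lambda>t. complex_of_real (g t)) a))"
      by (rule tr_cfc_mono[OF a _ g le])
    moreover have "cfc scC (\<lambda>t. complex_of_real (root m t)) (cfc scC (\<lambda>t. complex_of_real (h t)) a)
        = cfc scC (\<lambda>t. complex_of_real (root m (h t))) a"
      by (rule cfc_compose[OF a h h01]) (auto intro!: continuous_intros)
    ultimately show ?thesis by simp
  qed
  then show "\<forall>\<^sub>F m in sequentially.
      Re (\<tau> (cfc scC (\<lambda>t. complex_of_real (root m t)) (cfc scC (\<lambda>t. complex_of_real (h t)) a)))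
      \<le> Re (\<tau> (cfc scC (\<lambda>t. complex_of_real (g t)) a))"
    by simp
qed (simp_all add: trivial_limit_sequentially)

lemma tr_cfc_le_dim_fun_plus:
  fixes g :: "real \<Rightarrow> real"
  assumes b: "poly_sup_bounded b" and g: "continuous_on {0..1} g"
    and le: "\<And>t. t \<in> {0..1} \<Longrightarrow> g t \<le> root n t + \<eta>"
  shows "Re (\<tau> (cfc scC (\<lambda>t. complex_of_real (g t)) b)) \<le> dim_fun scC \<tau> b + \<eta>"
proof -
  have rc: "continuous_on {0..1} (\<lambda>t. root n t + \<eta>)"
    by (intro continuous_intros)
  have "Re (\<tau> (cfc scC (\<lambda>t. complex_of_real (g t)) b))
      \<le> Re (\<tau> (cfc scC (\<lambda>t. complex_of_real (root n t + \<eta>)) b))"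
    by (rule tr_cfc_mono[OF b g rc le])
  also have "cfc scC (\<lambda>t. complex_of_real (root n t + \<eta>)) b
      = cfc scC (\<lambda>t. complex_of_real (root n t)) b + cfc scC (\<lambda>t. complex_of_real \<eta>) b"
    unfolding of_real_add by (rule cfc_add[OF b]) (intro continuous_intros, rule continuous_on_const)
  also have "Re (\<tau> \<dots>) = Re (\<tau> (cfc scC (\<lambda>t. complex_of_real (root n t)) b)) + \<eta>"
    by (simp add: tr_add[OF tr] tr_cfc_const[OF b])
  also have "\<dots> \<le> dim_fun scC \<tau> b + \<eta>"
    using tr_cfc_root_tendsto_dim_fun(2)[OF b, of n] by simp
  finally show ?thesis .
qed

end

lemma norm2_cfc_diff_small:
  fixes f :: "real \<Rightarrow> complex"
  assumes f: "continuous_on {0..1} f" and \<gamma>: "\<gamma> > 0"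
  shows "\<exists>\<delta>>0. \<forall>a b \<tau>. positive_contraction star a \<longrightarrow> positive_contraction star b \<longrightarrow>
                tracial_state star scC \<tau> \<longrightarrow> norm2 star \<tau> (a - b) < \<delta> \<longrightarrow>
                norm2 star \<tau> (cfc scC f a - cfc scC f b) < \<gamma>"
proof -
  obtain p where p: "\<forall>t\<in>{0..1}. cmod (f t - poly p (of_real t)) < \<gamma>/4"
    using complex_poly_uniform_approx[OF f, of "\<gamma>/4"] \<gamma> by auto
  define L where "L = (\<Sum>i\<le>degree p. cmod (coeff p i) * real i)"
  have L0: "L \<ge> 0" by (simp add: L_def sum_nonneg)
  define \<delta> where "\<delta> = \<gamma> / (4 * (L + 1))"
  have \<delta>: "\<delta> > 0" using \<gamma> L0 by (simp add: \<delta>_def)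
  have approx: "norm2 star \<tau> (cfc scC f x - peval scC p x) \<le> \<gamma>/4"
    if "tracial_state star scC \<tau>" and "positive_contraction star x" for x \<tau>
    using p by (intro norm2_cfc_minus_peval_le[OF that f]) (auto simp: less_imp_le)
  show ?thesis
  proof (intro exI[of _ \<delta>] conjI allI impI \<delta>)
    fix a b \<tau>
    assume a: "positive_contraction star a" and b: "positive_contraction star b"
      and tr: "tracial_state star scC \<tau>" and ab: "norm2 star \<tau> (a - b) < \<delta>"
    have "norm2 star \<tau> (peval scC p a - peval scC p b) \<le> L * norm2 star \<tau> (a - b)"
      unfolding L_def
      by (rule norm2_peval_diff_le[OF tr positive_contraction_norm_le[OF a] positive_contraction_norm_le[OF b]])
    also have "\<dots> \<le> L * \<delta>" using ab L0 by (intro mult_left_mono) auto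
    also have "\<dots> \<le> \<gamma>/4" using \<gamma> L0 by (simp add: \<delta>_def field_simps)
    finally have middle: "norm2 star \<tau> (peval scC p a - peval scC p b) \<le> \<gamma>/4" .
    have split: "cfc scC f a - cfc scC f b
        = (cfc scC f a - peval scC p a) + ((peval scC p a - peval scC p b) - (cfc scC f b - peval scC p b))"
      by simp
    have "norm2 star \<tau> (cfc scC f a - cfc scC f b) \<le> norm2 star \<tau> (cfc scC f a - peval scC p a)
        + (norm2 star \<tau> (peval scC p a - peval scC p b) + norm2 star \<tau> (cfc scC f b - peval scC p b))"
      unfolding split by (rule order.trans[OF norm2_triangle[OF tr] add_left_mono[OF norm2_diff[OF tr]]])
    also have "\<dots> \<le> \<gamma>/4 + (\<gamma>/4 + \<gamma>/4)"
      using approx[OF tr a] approx[OF tr b] middle by simp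
    also have "\<dots> < \<gamma>" using \<gamma> by simp
    finally show "norm2 star \<tau> (cfc scC f a - cfc scC f b) < \<gamma>" .
  qed
qed

text \<open>With the ramp \<open>g\<close> rising from \<open>0\<close> at \<open>\<epsilon>/2\<close> to \<open>1\<close> at \<open>\<epsilon>\<close> and \<open>n\<close> so large that
  \<open>(\<epsilon>/2)\<^sup>1\<^sup>/\<^sup>n > 1 - \<gamma>/3\<close>:
  \<open>d\<^sub>\<tau>((a - \<epsilon>)\<^sub>+) \<le> \<tau>(g(a)) < \<tau>(g(b)) + \<gamma>/3 \<le> \<tau>(b\<^sup>1\<^sup>/\<^sup>n) + 2\<gamma>/3 \<le> d\<^sub>\<tau>(b) + 2\<gamma>/3\<close>.\<close>

lemma dim_fun_cut_down_le:
  assumes \<gamma>: "\<gamma> > 0" and \<epsilon>: "\<epsilon> > 0"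
  shows "\<exists>\<delta>>0. \<forall>a b \<tau>. positive_contraction star a \<longrightarrow> positive_contraction star b \<longrightarrow>
                tracial_state star scC \<tau> \<longrightarrow> norm2 star \<tau> (a - b) < \<delta> \<longrightarrow>
                dim_fun scC \<tau> (cut_down scC \<epsilon> a) < dim_fun scC \<tau> b + \<gamma>"
proof -
  define g where "g t = min 1 (max 0 (2 * t / \<epsilon> - 1))" for t
  have g: "continuous_on {0..1} g"
    unfolding g_def using \<epsilon> by (intro continuous_intros) auto
  obtain \<delta> where \<delta>: "\<delta> > 0" and close: "\<And>a b \<tau>. positive_contraction star a \<Longrightarrow>
      positive_contraction star b \<Longrightarrow> tracial_state star scC \<tau> \<Longrightarrow> norm2 star \<tau> (a - b) < \<delta> \<Longrightarrow>
      norm2 star \<tau> (cfc scC (\<lambda>t. complex_of_real (g t)) a - cfc scC (\<lambda>t. complex_of_real (g t)) b) < \<gamma>/3"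
    using norm2_cfc_diff_small[of "\<lambda>t. complex_of_real (g t)" "\<gamma>/3"] g \<gamma>
    by (auto intro: continuous_intros)
  obtain n where n: "n > 0" "1 - \<gamma>/3 < root n (\<epsilon>/2)"
    using root_gt_one_minus[of "\<epsilon>/2" "\<gamma>/3"] \<epsilon> \<gamma> by auto
  show ?thesis
  proof (intro exI[of _ \<delta>] conjI allI impI \<delta>)
    fix a b \<tau>
    assume a: "positive_contraction star a" and b: "positive_contraction star b"
      and tr: "tracial_state star scC \<tau>" and ab: "norm2 star \<tau> (a - b) < \<delta>"
    have aP: "poly_sup_bounded a" and bP: "poly_sup_bounded b"
      using a b by (auto intro: positive_contraction_poly_sup_bounded)
    have cut: "continuous_on {0..1} (\<lambda>t. max 0 (t - \<epsilon>))"
      by (intro continuous_intros)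
    have "dim_fun scC \<tau> (cut_down scC \<epsilon> a) \<le> Re (\<tau> (cfc scC (\<lambda>t. complex_of_real (g t)) a))"
      unfolding cut_down_def
      using dim_fun_cfc_le_tr_cfc[OF tr aP cut _ g] root_cut_down_le_ramp[OF \<epsilon>] \<epsilon>
      by (auto simp: g_def)
    also have "\<dots> < Re (\<tau> (cfc scC (\<lambda>t. complex_of_real (g t)) b)) + \<gamma>/3"
      by (rule tr_Re_less_of_norm2_diff_less[OF tr close[OF a b tr ab]])
    also have "\<dots> \<le> dim_fun scC \<tau> b + \<gamma>/3 + \<gamma>/3"
    proof -
      have "g t \<le> root n t + \<gamma>/3" if "t \<in> {0..1}" for t
        using that ramp_le_root_plus[OF \<epsilon> n(1) _ _ n(2)] \<gamma> by (simp add: g_def)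
      then have "Re (\<tau> (cfc scC (\<lambda>t. complex_of_real (g t)) b)) \<le> dim_fun scC \<tau> b + \<gamma>/3"
        by (rule tr_cfc_le_dim_fun_plus[OF tr bP g])
      then show ?thesis by simp
    qed
    finally show "dim_fun scC \<tau> (cut_down scC \<epsilon> a) < dim_fun scC \<tau> b + \<gamma>"
      using \<gamma> by simp
  qed
qed

end

theorem lemma3p1:
  fixes star :: "'a::{real_normed_algebra_1,banach} \<Rightarrow> 'a"
    and scC :: "complex \<Rightarrow> 'a \<Rightarrow> 'a"
    and \<gamma> \<epsilon> :: real
  assumes "unital_cstar_algebra star scC"
    and "\<gamma> > 0" and "\<epsilon> > 0"
  shows "(\<forall>f :: real \<Rightarrow> complex. continuous_on {0..1} f \<longrightarrow>
            (\<exists>\<delta>>0. \<forall>a b \<tau>. positive_contraction star a \<longrightarrow> positive_contraction star b \<longrightarrow>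
                tracial_state star scC \<tau> \<longrightarrow> norm2 star \<tau> (a - b) < \<delta> \<longrightarrow>
                norm2 star \<tau> (cfc scC f a - cfc scC f b) < \<gamma>))
       \<and> (\<exists>\<delta>>0. \<forall>a b \<tau>. positive_contraction star a \<longrightarrow> positive_contraction star b \<longrightarrow>
                tracial_state star scC \<tau> \<longrightarrow> norm2 star \<tau> (a - b) < \<delta> \<longrightarrow>
                dim_fun scC \<tau> (cut_down scC \<epsilon> a) < dim_fun scC \<tau> b + \<gamma>)"
proof -
  interpret unital_cstar_algebra star scC
    by (rule assms(1))
  show ?thesis
    using norm2_cfc_diff_small[OF _ assms(2)] dim_fun_cut_down_le[OF assms(2,3)] by blast
qed

end
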